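(* Let $k\geq 3$ and let $\mathcal{G}$ be a $k$-uniform unicyclic hypergraph of order $n$. Then $\rho(\mathcal{G})\leq\rho(\mathscr{U}^{\ast})$, with equality if and only if $\mathcal{G}\cong \mathscr{U}^{\ast}$.
   Context: A hypergraph $\mathcal{G}=(V,E)$ has a nonempty finite vertex set $V$ and an edge set $E$ of subsets of $V$, each of size at least $2$; all hypergraphs are simple (no repeated edges) and undirected. It is $k$-uniform if every edge has exactly $k$ vertices. Two vertices are adjacent if some edge contains both. A hyperpath of length $q$ is an alternating sequence $v_1e_1v_2\cdots v_qe_qv_{q+1}$ of distinct vertices and distinct edges with $v_i,v_{i+1}\in e_i$, $e_i\cap e_{i+1}=\{v_{i+1}\}$, and $e_i\cap e_j=\emptyset$ for $|i-j|\geq 2$; $\mathcal{G}$ is connected if any two vertices are joined by a hyperpath. A connected $k$-uniform hypergraph with $n$ vertices and $m$ edges is called unicyclic if $n-1=(k-1)m-1$, i.e. $n=(k-1)m$ (equivalently, it contains exactly one hypercycle). The adjacency matrix $\mathcal{A}_{\mathcal{G}}$ is the $|V|\times|V|$ matrix with $(\mathcal{A}_{\mathcal{G}})_{ij}=\sum_{e\in E,\ i,j\in e}\frac{1}{|e|-1}$ (for $i\neq j$; diagonal entries are $0$), and $\rho(\mathcal{G})$ is the spectral radius (largest modulus of an eigenvalue) of $\mathcal{A}_{\mathcal{G}}$. Let $\mathbb{C}$ be the $k$-uniform 2-hypercycle consisting of two edges $e_1,e_2$ with $e_1\cap e_2=\{v_1,v_2\}$, i.e. $e_i=\{v_1,v_{a(i,1)},\dots,v_{a(i,k-2)},v_2\}$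 ($i=1,2$) with all listed vertices distinct. Attaching a pendant edge at a vertex $v$ means adding a new edge consisting of $v$ and $k-1$ new vertices. $\mathscr{U}^{\ast}$ is the $k$-uniform unicyclic hypergraph of order $n$ obtained from $\mathbb{C}$ by attaching $\frac{n}{k-1}-2$ pendant edges at $v_1$. *)

theory Defs
  imports Complex_Main
begin

type_synonym 'a hypergraph = "'a set \<times> 'a set set"

definition hypergraph :: "'a hypergraph \<Rightarrow> bool" where
  "hypergraph G \<longleftrightarrow> finite (fst G) \<and> fst G \<noteq> {} \<and>
     (\<forall>e\<in>snd G. e \<subseteq> fst G \<and> card e \<ge> 2)"

definition uniform :: "nat \<Rightarrow> 'a hypergraph \<Rightarrow> bool" where
  "uniform k G \<longleftrightarrow> (\<forall>e\<in>snd G. card e = k)"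

definition hyperpath :: "'a hypergraph \<Rightarrow> 'a list \<Rightarrow> 'a set list \<Rightarrow> bool" where
  "hyperpath G vs es \<longleftrightarrow>
     length vs = Suc (length es) \<and> distinct vs \<and> distinct es \<and>
     set vs \<subseteq> fst G \<and> set es \<subseteq> snd G \<and>
     (\<forall>i<length es. vs ! i \<in> es ! i \<and> vs ! Suc i \<in> es ! i) \<and>
     (\<forall>i. Suc i < length es \<longrightarrow> es ! i \<inter> es ! Suc i = {vs ! Suc i}) \<and>
     (\<forall>i j. i < length es \<and> j < length es \<and> i + 2 \<le> j \<longrightarrow> es ! i \<inter> es ! j = {})"

definition hg_connected :: "'a hypergraph \<Rightarrow> bool" where
  "hg_connected G \<longleftrightarrow> (\<forall>u\<in>fst G. \<forall>v\<in>fst G. \<exists>vs es.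
      hyperpath G vs es \<and> hd vs = u \<and> last vs = v)"

definition unicyclic :: "nat \<Rightarrow> 'a hypergraph \<Rightarrow> bool" where
  "unicyclic k G \<longleftrightarrow> hypergraph G \<and> uniform k G \<and> hg_connected G \<and>
     card (fst G) = (k - 1) * card (snd G)"

definition adj :: "'a hypergraph \<Rightarrow> 'a \<Rightarrow> 'a \<Rightarrow> real" where
  "adj G i j = (if i = j then 0 else
      (\<Sum>e\<in>{e\<in>snd G. i \<in> e \<and> j \<in> e}. 1 / (real (card e) - 1)))"

definition hg_eigenvalue :: "'a hypergraph \<Rightarrow> complex \<Rightarrow> bool" where
  "hg_eigenvalue G mu \<longleftrightarrow> (\<exists>x :: 'a \<Rightarrow> complex. (\<exists>v\<in>fst G. x v \<noteq> 0) \<and>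
      (\<forall>i\<in>fst G. (\<Sum>j\<in>fst G. complex_of_real (adj G i j) * x j) = mu * x i))"

definition spectral_radius :: "'a hypergraph \<Rightarrow> real" where
  "spectral_radius G = Max {cmod mu | mu. hg_eigenvalue G mu}"

definition hg_iso :: "'a hypergraph \<Rightarrow> 'b hypergraph \<Rightarrow> bool" where
  "hg_iso G H \<longleftrightarrow> (\<exists>f. bij_betw f (fst G) (fst H) \<and> snd H = (\<lambda>e. f ` e) ` snd G)"

text \<open>U*: vertices {0..<n}; v1 = 0, v2 = 1; e1 = {0,1} \<union> {2..<k}, e2 = {0,1} \<union> {k..<2k-2};
  pendant edges {0} \<union> {2k-2+j(k-1) ..< 2k-2+(j+1)(k-1)} for j < n/(k-1) - 2.\<close>
definition Ustar :: "nat \<Rightarrow> nat \<Rightarrow> nat hypergraph" where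
  "Ustar k n = ({0..<n},
     {{0,1} \<union> {2..<k}, {0,1} \<union> {k..<2*k-2}} \<union>
     {insert 0 {2*k-2 + j*(k-1) ..< 2*k-2 + (j+1)*(k-1)} | j. j < n div (k-1) - 2})"

end

theory Submission
  imports Defs "Jordan_Normal_Form.Char_Poly" "HOL-Library.Disjoint_Sets"
begin

text \<open>Let \<open>x\<close> be an eigenvector of \<open>G\<close> for an eigenvalue \<open>\<mu>\<close>, \<open>w = |x|\<close>, and \<open>r\<close> a vertex where
  \<open>w\<close> is maximal. Growing the connected hypergraph \<open>G\<close> from \<open>r\<close> edge by edge, every edge \<open>e\<close>
  discovers a set \<open>Q e\<close> of new vertices; since \<open>n = (k - 1) m\<close>, all edges but one discover
  \<open>k - 1\<close> vertices and the remaining edge \<open>s\<close> discovers \<open>k - 2\<close>. Replacing in each edge one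
  vertex outside \<open>Q e\<close> by \<open>r\<close> turns \<open>G\<close> into a copy \<open>H\<close> of \<open>U*\<close> on the same vertex set, and
  because \<open>w r\<close> is maximal this can only increase the quadratic form:
  \<open>|\<mu>| \<parallel>w\<parallel>\<^sup>2 \<le> w\<^sup>T A\<^sub>G w \<le> w\<^sup>T A\<^sub>H w \<le> \<rho>(U*) \<parallel>w\<parallel>\<^sup>2\<close>, the last step by comparison
  with an explicit positive eigenvector \<open>p\<close> of \<open>U*\<close>. If \<open>|\<mu>| = \<rho>(U*)\<close>, then \<open>w\<close> is a multiple
  of \<open>p\<close>, whose maximum is attained only at the root (and at \<open>v\<close> when \<open>U*\<close> has no pendant
  edge, in which case no edge moves \<open>v\<close>); hence no vertex was moved and \<open>G = H\<close>.\<close>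

section \<open>Eigenvalues and the spectral radius\<close>

definition adj_mat :: "'a hypergraph \<Rightarrow> 'a list \<Rightarrow> complex mat" where
  "adj_mat G vs = mat (length vs) (length vs) (\<lambda>(i, j). complex_of_real (adj G (vs ! i) (vs ! j)))"

lemma adj_mat_mult_vec:
  assumes vs: "distinct vs" "set vs = fst G" and i: "i < length vs"
  shows "(adj_mat G vs *\<^sub>v vec (length vs) (\<lambda>j. x (vs ! j))) $ i =
    (\<Sum>u\<in>fst G. complex_of_real (adj G (vs ! i) u) * x u)"
proof -
  have "(adj_mat G vs *\<^sub>v vec (length vs) (\<lambda>j. x (vs ! j))) $ i =
      (\<Sum>j<length vs. complex_of_real (adj G (vs ! i) (vs ! j)) * x (vs ! j))"
    using i by (simp add: adj_mat_def scalar_prod_def atLeast0LessThan)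
  also have "\<dots> = (\<Sum>u\<in>fst G. complex_of_real (adj G (vs ! i) u) * x u)"
    using sum.reindex_bij_betw[OF bij_betw_nth[OF vs(1) refl vs(2)[symmetric]],
        of "\<lambda>u. complex_of_real (adj G (vs ! i) u) * x u"] .
  finally show ?thesis .
qed

lemma hg_eigenvalue_imp_eigenvalue_adj_mat:
  assumes vs: "distinct vs" "set vs = fst G" and "hg_eigenvalue G mu"
  shows "eigenvalue (adj_mat G vs) mu"
proof -
  let ?n = "length vs"
  obtain x where x0: "\<exists>u\<in>fst G. x u \<noteq> 0"
    and xe: "\<forall>i\<in>fst G. (\<Sum>j\<in>fst G. complex_of_real (adj G i j) * x j) = mu * x i"
    using assms(3) unfolding hg_eigenvalue_def by blast
  define v where "v = vec ?n (\<lambda>j. x (vs ! j))"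
  obtain j where j: "j < ?n" "x (vs ! j) \<noteq> 0"
    using x0 vs(2) by (metis in_set_conv_nth)
  then have "v \<noteq> 0\<^sub>v ?n"
    unfolding v_def by (metis index_vec index_zero_vec(1))
  moreover have "adj_mat G vs *\<^sub>v v = mu \<cdot>\<^sub>v v"
  proof (rule eq_vecI)
    fix i assume "i < dim_vec (mu \<cdot>\<^sub>v v)"
    then have i: "i < ?n" by (simp add: v_def)
    then show "(adj_mat G vs *\<^sub>v v) $ i = (mu \<cdot>\<^sub>v v) $ i"
      using adj_mat_mult_vec[OF vs i] xe nth_mem[OF i] vs(2) by (simp add: v_def)
  qed (simp add: adj_mat_def v_def)
  ultimately show ?thesis
    unfolding eigenvalue_def eigenvector_def by (intro exI[of _ v]) (auto simp: adj_mat_def v_def)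
qed

lemma eigenvalue_adj_mat_imp_hg_eigenvalue:
  assumes vs: "distinct vs" "set vs = fst G" and "eigenvalue (adj_mat G vs) mu"
  shows "hg_eigenvalue G mu"
proof -
  let ?n = "length vs"
  obtain v where v: "v \<in> carrier_vec ?n" "v \<noteq> 0\<^sub>v ?n" "adj_mat G vs *\<^sub>v v = mu \<cdot>\<^sub>v v"
    using assms(3) unfolding eigenvalue_def eigenvector_def by (auto simp: adj_mat_def)
  define x where "x u = v $ the_inv_into {..<?n} ((!) vs) u" for u
  have v_eq: "v = vec ?n (\<lambda>j. x (vs ! j))"
    using v(1) the_inv_into_f_f[OF bij_betw_imp_inj_on[OF bij_betw_nth[OF vs(1) refl refl]]]
    by (intro eq_vecI) (auto simp: x_def)
  show ?thesis
    unfolding hg_eigenvalue_def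
  proof (intro exI[of _ x] conjI ballI)
    show "\<exists>u\<in>fst G. x u \<noteq> 0"
    proof (rule ccontr)
      assume "\<not> ?thesis"
      then have "\<forall>j<?n. x (vs ! j) = 0"
        using vs(2) by (metis nth_mem)
      then have "v = 0\<^sub>v ?n"
        using v_eq by (auto intro!: eq_vecI)
      with v(2) show False ..
    qed
    fix u assume "u \<in> fst G"
    then obtain i where i: "i < ?n" "u = vs ! i"
      using vs(2) by (metis in_set_conv_nth)
    have "(\<Sum>j\<in>fst G. complex_of_real (adj G u j) * x j) = (adj_mat G vs *\<^sub>v v) $ i"
      using adj_mat_mult_vec[OF vs i(1)] v_eq i(2) by simp
    also have "\<dots> = mu * x u"
      using v(3) v_eq i by simp
    finally show "(\<Sum>j\<in>fst G. complex_of_real (adj G u j) * x j) = mu * x u" .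
  qed
qed

lemma hg_eigenvalues_finite_nonempty:
  assumes "hypergraph G"
  shows "finite {mu. hg_eigenvalue G mu}" "{mu. hg_eigenvalue G mu} \<noteq> {}"
proof -
  obtain vs where vs: "distinct vs" "set vs = fst G"
    using assms finite_distinct_list unfolding hypergraph_def by metis
  let ?p = "char_poly (adj_mat G vs)"
  have M: "adj_mat G vs \<in> carrier_mat (length vs) (length vs)"
    by (simp add: adj_mat_def)
  have roots: "{mu. hg_eigenvalue G mu} = {mu. poly ?p mu = 0}"
    using hg_eigenvalue_imp_eigenvalue_adj_mat[OF vs] eigenvalue_adj_mat_imp_hg_eigenvalue[OF vs]
      eigenvalue_root_char_poly[OF M] by blast
  have deg: "degree ?p = length vs" and monic: "coeff ?p (length vs) = 1"
    using degree_monic_char_poly[OF M] by auto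
  from monic have "?p \<noteq> 0" by auto
  then show "finite {mu. hg_eigenvalue G mu}"
    unfolding roots by (rule poly_roots_finite)
  have "length vs > 0"
    using vs assms unfolding hypergraph_def by auto
  then have "\<not> constant (poly ?p)"
    using deg by (simp add: constant_degree)
  then show "{mu. hg_eigenvalue G mu} \<noteq> {}"
    unfolding roots using fundamental_theorem_of_algebra by auto
qed

lemma eigenvalue_norm_le_spectral_radius:
  assumes "hypergraph G" "hg_eigenvalue G mu"
  shows "cmod mu \<le> spectral_radius G"
  unfolding spectral_radius_def setcompr_eq_image
  using hg_eigenvalues_finite_nonempty[OF assms(1)] assms(2) by (intro Max_ge) auto

lemma spectral_radius_le:
  assumes "hypergraph G" "\<And>mu. hg_eigenvalue G mu \<Longrightarrow> cmod mu \<le> L"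
  shows "spectral_radius G \<le> L"
  unfolding spectral_radius_def setcompr_eq_image
  using hg_eigenvalues_finite_nonempty[OF assms(1)] assms(2) by (subst Max_le_iff) auto

lemma spectral_radius_attained:
  assumes "hypergraph G"
  obtains mu where "hg_eigenvalue G mu" "cmod mu = spectral_radius G"
proof -
  have "spectral_radius G \<in> cmod ` {mu. hg_eigenvalue G mu}"
    unfolding spectral_radius_def setcompr_eq_image
    using hg_eigenvalues_finite_nonempty[OF assms] by (intro Max_in) auto
  then show ?thesis using that by auto
qed

section \<open>Adjacency and the quadratic form\<close>

lemma hypergraph_finite_edges: "hypergraph G \<Longrightarrow> finite (snd G)"
  unfolding hypergraph_def by (meson Pow_iff finite_Pow_iff finite_subset subsetI)

lemma hypergraph_finite_edge: "hypergraph G \<Longrightarrow> e \<in> snd G \<Longrightarrow> finite e"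
  unfolding hypergraph_def by (meson finite_subset)

lemma adj_sym: "adj G i j = adj G j i"
  unfolding adj_def by (auto intro!: sum.cong)

lemma adj_nonneg: "hypergraph G \<Longrightarrow> adj G i j \<ge> 0"
  unfolding adj_def hypergraph_def by (auto intro!: sum_nonneg simp: of_nat_diff)

lemma adj_pos:
  assumes hg: "hypergraph G" and e: "e \<in> snd G" "i \<in> e" "j \<in> e" and "i \<noteq> j"
  shows "adj G i j > 0"
proof -
  have "(\<Sum>e\<in>{e\<in>snd G. i \<in> e \<and> j \<in> e}. 1 / (real (card e) - 1)) > 0"
    using hg e hypergraph_finite_edges[OF hg] unfolding hypergraph_def
    by (intro sum_pos2[where i=e]) (auto simp: of_nat_diff)
  then show ?thesis unfolding adj_def using \<open>i \<noteq> j\<close> by simp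
qed

lemma adj_sum_edges:
  assumes hg: "hypergraph G"
  shows "(\<Sum>j\<in>fst G. adj G i j * x j) =
    (\<Sum>e\<in>{e\<in>snd G. i \<in> e}. (\<Sum>j\<in>e - {i}. x j) / (real (card e) - 1))"
proof -
  let ?V = "fst G" and ?E = "snd G" and ?c = "\<lambda>e. real (card e) - 1"
  have "(\<Sum>j\<in>?V. adj G i j * x j) = (\<Sum>j\<in>?V. \<Sum>e\<in>{e\<in>?E. i \<in> e \<and> j \<in> e \<and> j \<noteq> i}. x j / ?c e)"
    unfolding adj_def by (intro sum.cong refl) (auto simp: sum_distrib_right intro!: sum.cong)
  also have "\<dots> = (\<Sum>e\<in>?E. \<Sum>j\<in>{j\<in>?V. i \<in> e \<and> j \<in> e \<and> j \<noteq> i}. x j / ?c e)"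
    using hg hypergraph_finite_edges[OF hg] unfolding hypergraph_def by (intro sum.swap_restrict) auto
  also have "\<dots> = (\<Sum>e\<in>?E. if i \<in> e then (\<Sum>j\<in>e - {i}. x j) / ?c e else 0)"
  proof (intro sum.cong refl)
    fix e assume "e \<in> ?E"
    then have "i \<in> e \<Longrightarrow> {j\<in>?V. i \<in> e \<and> j \<in> e \<and> j \<noteq> i} = e - {i}"
      using hg unfolding hypergraph_def by auto
    then show "(\<Sum>j\<in>{j\<in>?V. i \<in> e \<and> j \<in> e \<and> j \<noteq> i}. x j / ?c e) =
        (if i \<in> e then (\<Sum>j\<in>e - {i}. x j) / ?c e else 0)"
      by (simp add: sum_divide_distrib)
  qed
  also have "\<dots> = (\<Sum>e\<in>{e\<in>?E. i \<in> e}. (\<Sum>j\<in>e - {i}. x j) / ?c e)"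
    using hypergraph_finite_edges[OF hg] by (simp add: sum.inter_filter)
  finally show ?thesis .
qed

definition pair_sum :: "'a set \<Rightarrow> ('a \<Rightarrow> real) \<Rightarrow> real" where
  "pair_sum e w = (\<Sum>i\<in>e. \<Sum>j\<in>e - {i}. w i * w j)"

lemma pair_sum_insert:
  assumes "finite B" "a \<notin> B"
  shows "pair_sum (insert a B) w = 2 * w a * sum w B + pair_sum B w"
proof -
  have "(\<Sum>i\<in>B. \<Sum>j\<in>insert a B - {i}. w i * w j) = (\<Sum>i\<in>B. w i * w a + (\<Sum>j\<in>B - {i}. w i * w j))"
    using assms by (intro sum.cong refl) (auto simp: insert_Diff_if)
  moreover have "insert a B - {a} = B"
    using assms by auto
  ultimately show ?thesis
    using assms unfolding pair_sum_def
    by (simp add: sum.distrib sum_distrib_left sum_distrib_right mult_ac)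
qed

definition quad_form :: "'a hypergraph \<Rightarrow> ('a \<Rightarrow> real) \<Rightarrow> real" where
  "quad_form G w = (\<Sum>i\<in>fst G. \<Sum>j\<in>fst G. adj G i j * w i * w j)"

lemma quad_form_edge_sum:
  assumes hg: "hypergraph G"
  shows "quad_form G w = (\<Sum>e\<in>snd G. pair_sum e w / (real (card e) - 1))"
proof -
  let ?V = "fst G" and ?E = "snd G" and ?c = "\<lambda>e. real (card e) - 1"
  have "quad_form G w = (\<Sum>i\<in>?V. w i * (\<Sum>j\<in>?V. adj G i j * w j))"
    unfolding quad_form_def by (simp add: sum_distrib_left mult_ac)
  also have "\<dots> = (\<Sum>i\<in>?V. \<Sum>e\<in>{e\<in>?E. i \<in> e}. (\<Sum>j\<in>e - {i}. w i * w j) / ?c e)"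
    by (simp add: adj_sum_edges[OF hg] sum_distrib_left)
  also have "\<dots> = (\<Sum>e\<in>?E. \<Sum>i\<in>{i\<in>?V. i \<in> e}. (\<Sum>j\<in>e - {i}. w i * w j) / ?c e)"
    using hg hypergraph_finite_edges[OF hg] unfolding hypergraph_def by (intro sum.swap_restrict) auto
  also have "\<dots> = (\<Sum>e\<in>?E. pair_sum e w / ?c e)"
  proof (intro sum.cong refl)
    fix e assume "e \<in> ?E"
    then have "{i\<in>?V. i \<in> e} = e"
      using hg unfolding hypergraph_def by auto
    then show "(\<Sum>i\<in>{i\<in>?V. i \<in> e}. (\<Sum>j\<in>e - {i}. w i * w j) / ?c e) = pair_sum e w / ?c e"
      unfolding pair_sum_def by (simp add: sum_divide_distrib)
  qed
  finally show ?thesis .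
qed

lemma eigenvalue_norm_le_quad_form:
  assumes hg: "hypergraph G"
    and eig: "\<forall>i\<in>fst G. (\<Sum>j\<in>fst G. complex_of_real (adj G i j) * x j) = mu * x i"
  shows "cmod mu * (\<Sum>i\<in>fst G. (cmod (x i))\<^sup>2) \<le> quad_form G (\<lambda>i. cmod (x i))"
proof -
  have "cmod mu * (cmod (x i))\<^sup>2 \<le> (\<Sum>j\<in>fst G. adj G i j * cmod (x i) * cmod (x j))"
    if i: "i \<in> fst G" for i
  proof -
    have "cmod mu * cmod (x i) = cmod (\<Sum>j\<in>fst G. complex_of_real (adj G i j) * x j)"
      using eig i by (simp add: norm_mult)
    also have "\<dots> \<le> (\<Sum>j\<in>fst G. cmod (complex_of_real (adj G i j) * x j))"
      by (rule norm_sum)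
    also have "\<dots> = (\<Sum>j\<in>fst G. adj G i j * cmod (x j))"
      using adj_nonneg[OF hg] by (simp add: norm_mult)
    finally have "cmod mu * cmod (x i) * cmod (x i) \<le> (\<Sum>j\<in>fst G. adj G i j * cmod (x j)) * cmod (x i)"
      by (simp add: mult_right_mono)
    also have "\<dots> = (\<Sum>j\<in>fst G. adj G i j * cmod (x i) * cmod (x j))"
      by (subst sum_distrib_right) (simp add: mult_ac)
    finally show ?thesis
      by (simp add: power2_eq_square mult_ac)
  qed
  then have "(\<Sum>i\<in>fst G. cmod mu * (cmod (x i))\<^sup>2) \<le> quad_form G (\<lambda>i. cmod (x i))"
    unfolding quad_form_def by (rule sum_mono)
  then show ?thesis by (simp add: sum_distrib_left)
qed

lemma hg_eigenvalue_modulus_vector: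
  assumes hg: "hypergraph G" and mu: "hg_eigenvalue G mu"
  obtains w r where "r \<in> fst G" "\<And>i. i \<in> fst G \<Longrightarrow> 0 \<le> w i \<and> w i \<le> w r"
    "(\<Sum>i\<in>fst G. (w i)\<^sup>2) > 0" "cmod mu * (\<Sum>i\<in>fst G. (w i)\<^sup>2) \<le> quad_form G w"
proof -
  have fin: "finite (fst G)" "fst G \<noteq> {}" using hg unfolding hypergraph_def by auto
  obtain x where x0: "\<exists>i\<in>fst G. x i \<noteq> 0"
    and eig: "\<forall>i\<in>fst G. (\<Sum>j\<in>fst G. complex_of_real (adj G i j) * x j) = mu * x i"
    using mu unfolding hg_eigenvalue_def by blast
  define w where "w i = cmod (x i)" for i
  obtain r where r: "r \<in> fst G" "Max (w ` fst G) = w r"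
    using obtains_MAX[OF fin] by blast
  have "0 \<le> w i \<and> w i \<le> w r" if "i \<in> fst G" for i
    using Max_ge[of "w ` fst G" "w i"] fin that r(2) unfolding w_def by simp
  moreover obtain i where "i \<in> fst G" "x i \<noteq> 0" using x0 by blast
  then have "(\<Sum>i\<in>fst G. (w i)\<^sup>2) > 0"
    using fin unfolding w_def by (intro sum_pos2[where i=i]) auto
  moreover have "cmod mu * (\<Sum>i\<in>fst G. (w i)\<^sup>2) \<le> quad_form G w"
    unfolding w_def by (rule eigenvalue_norm_le_quad_form[OF hg eig])
  ultimately show ?thesis using that r(1) by blast
qed

lemma quad_form_defect_eq:
  assumes pos: "\<forall>i\<in>fst G. p i > 0"
    and eig: "\<forall>i\<in>fst G. (\<Sum>j\<in>fst G. adj G i j * p j) = lam * p i"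
  shows "lam * (\<Sum>i\<in>fst G. (w i)\<^sup>2) - quad_form G w =
    (\<Sum>i\<in>fst G. \<Sum>j\<in>fst G. adj G i j * (w i * p j - w j * p i)\<^sup>2 / (p i * p j)) / 2"
proof -
  let ?V = "fst G"
  have half: "(\<Sum>i\<in>?V. \<Sum>j\<in>?V. adj G i j * p j * (w i)\<^sup>2 / p i) = lam * (\<Sum>i\<in>?V. (w i)\<^sup>2)"
  proof -
    have "(\<Sum>i\<in>?V. \<Sum>j\<in>?V. adj G i j * p j * (w i)\<^sup>2 / p i) =
        (\<Sum>i\<in>?V. (w i)\<^sup>2 / p i * (\<Sum>j\<in>?V. adj G i j * p j))"
      by (simp add: sum_distrib_left sum_divide_distrib mult_ac)
    also have "\<dots> = (\<Sum>i\<in>?V. lam * (w i)\<^sup>2)"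
      using eig pos by (intro sum.cong) auto
    finally show ?thesis by (simp add: sum_distrib_left)
  qed
  have "(\<Sum>i\<in>?V. \<Sum>j\<in>?V. adj G i j * (w i * p j - w j * p i)\<^sup>2 / (p i * p j)) =
      (\<Sum>i\<in>?V. \<Sum>j\<in>?V. adj G i j * p j * (w i)\<^sup>2 / p i + adj G j i * p i * (w j)\<^sup>2 / p j
        - 2 * (adj G i j * w i * w j))"
  proof (intro sum.cong refl)
    fix i j assume "i \<in> ?V" "j \<in> ?V"
    then have "p i > 0" "p j > 0" using pos by auto
    then show "adj G i j * (w i * p j - w j * p i)\<^sup>2 / (p i * p j) =
        adj G i j * p j * (w i)\<^sup>2 / p i + adj G j i * p i * (w j)\<^sup>2 / p j - 2 * (adj G i j * w i * w j)"
      by (simp add: adj_sym[of G j i] field_simps power2_eq_square)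
  qed
  also have "\<dots> = (\<Sum>i\<in>?V. \<Sum>j\<in>?V. adj G i j * p j * (w i)\<^sup>2 / p i)
      + (\<Sum>i\<in>?V. \<Sum>j\<in>?V. adj G j i * p i * (w j)\<^sup>2 / p j) - 2 * quad_form G w"
    unfolding quad_form_def by (simp add: sum.distrib sum_subtractf sum_distrib_left)
  also have "(\<Sum>i\<in>?V. \<Sum>j\<in>?V. adj G j i * p i * (w j)\<^sup>2 / p j) = lam * (\<Sum>i\<in>?V. (w i)\<^sup>2)"
    by (subst sum.swap) (rule half)
  finally show ?thesis using half by simp
qed

lemma quad_form_le_perron:
  assumes hg: "hypergraph G" and pos: "\<forall>i\<in>fst G. p i > 0"
    and eig: "\<forall>i\<in>fst G. (\<Sum>j\<in>fst G. adj G i j * p j) = lam * p i"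
  shows "quad_form G w \<le> lam * (\<Sum>i\<in>fst G. (w i)\<^sup>2)"
proof -
  have "(\<Sum>i\<in>fst G. \<Sum>j\<in>fst G. adj G i j * (w i * p j - w j * p i)\<^sup>2 / (p i * p j)) \<ge> 0"
    using pos adj_nonneg[OF hg] by (intro sum_nonneg divide_nonneg_pos mult_nonneg_nonneg) auto
  then show ?thesis using quad_form_defect_eq[OF pos eig, of w] by simp
qed

lemma quad_form_eq_perron_imp_proportional:
  assumes hg: "hypergraph G" and pos: "\<forall>i\<in>fst G. p i > 0"
    and eig: "\<forall>i\<in>fst G. (\<Sum>j\<in>fst G. adj G i j * p j) = lam * p i"
    and eq: "quad_form G w = lam * (\<Sum>i\<in>fst G. (w i)\<^sup>2)"
    and ij: "i \<in> fst G" "j \<in> fst G" "adj G i j \<noteq> 0"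
  shows "w i * p j = w j * p i"
proof -
  let ?T = "\<lambda>i j. adj G i j * (w i * p j - w j * p i)\<^sup>2 / (p i * p j)"
  have fin: "finite (fst G)" using hg unfolding hypergraph_def by auto
  have T0: "?T i j \<ge> 0" if "i \<in> fst G" "j \<in> fst G" for i j
    using pos adj_nonneg[OF hg] that by (intro divide_nonneg_pos mult_nonneg_nonneg) auto
  have "(\<Sum>i\<in>fst G. \<Sum>j\<in>fst G. ?T i j) = 0"
    using quad_form_defect_eq[OF pos eig, of w] eq by simp
  then have "\<forall>i\<in>fst G. (\<Sum>j\<in>fst G. ?T i j) = 0"
    using fin T0 by (subst sum_nonneg_eq_0_iff[symmetric]) (auto intro!: sum_nonneg)
  then have "?T i j = 0"
    using fin T0 ij by (auto simp: sum_nonneg_eq_0_iff)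
  then have "(w i * p j - w j * p i)\<^sup>2 = 0"
    using ij pos by (metis divide_eq_0_iff mult_eq_0_iff order_less_irrefl)
  then show ?thesis by simp
qed

lemma eigenvalue_norm_le_perron:
  assumes hg: "hypergraph G" and pos: "\<forall>i\<in>fst G. p i > 0"
    and eig: "\<forall>i\<in>fst G. (\<Sum>j\<in>fst G. adj G i j * p j) = lam * p i"
    and mu: "hg_eigenvalue G mu"
  shows "cmod mu \<le> lam"
proof -
  obtain w r where S: "(\<Sum>i\<in>fst G. (w i)\<^sup>2) > 0"
    and norm: "cmod mu * (\<Sum>i\<in>fst G. (w i)\<^sup>2) \<le> quad_form G w"
    using hg_eigenvalue_modulus_vector[OF hg mu] by blast
  have "cmod mu * (\<Sum>i\<in>fst G. (w i)\<^sup>2) \<le> lam * (\<Sum>i\<in>fst G. (w i)\<^sup>2)"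
    using norm quad_form_le_perron[OF hg pos eig, of w] by linarith
  then show ?thesis using S by simp
qed

lemma spectral_radius_perron:
  assumes hg: "hypergraph G" and pos: "\<forall>i\<in>fst G. p i > 0"
    and eig: "\<forall>i\<in>fst G. (\<Sum>j\<in>fst G. adj G i j * p j) = lam * p i"
  shows "hg_eigenvalue G (complex_of_real lam)" "spectral_radius G = lam"
proof -
  show ev: "hg_eigenvalue G (complex_of_real lam)"
    unfolding hg_eigenvalue_def
  proof (intro exI[of _ "\<lambda>i. complex_of_real (p i)"] conjI ballI)
    show "\<exists>v\<in>fst G. complex_of_real (p v) \<noteq> 0"
      using hg pos unfolding hypergraph_def by fastforce
    fix i assume "i \<in> fst G"
    have "(\<Sum>j\<in>fst G. complex_of_real (adj G i j) * complex_of_real (p j)) =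
        complex_of_real (\<Sum>j\<in>fst G. adj G i j * p j)"
      by simp
    also have "\<dots> = complex_of_real lam * complex_of_real (p i)"
      using eig \<open>i \<in> fst G\<close> by simp
    finally show "(\<Sum>j\<in>fst G. complex_of_real (adj G i j) * complex_of_real (p j)) =
        complex_of_real lam * complex_of_real (p i)" .
  qed
  obtain i where i: "i \<in> fst G" using hg unfolding hypergraph_def by auto
  have "0 \<le> (\<Sum>j\<in>fst G. adj G i j * p j)"
    using adj_nonneg[OF hg] pos by (intro sum_nonneg mult_nonneg_nonneg) (auto simp: less_imp_le)
  then have "0 \<le> lam * p i" using eig i by simp
  then have "lam \<ge> 0" using pos i by (auto simp: zero_le_mult_iff)
  moreover have "spectral_radius G \<le> lam"
    by (rule spectral_radius_le[OF hg eigenvalue_norm_le_perron[OF hg pos eig]])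
  moreover have "cmod (complex_of_real lam) \<le> spectral_radius G"
    by (rule eigenvalue_norm_le_spectral_radius[OF hg ev])
  ultimately show "spectral_radius G = lam" by simp
qed

lemma adj_iso:
  assumes hg: "hypergraph G" and f: "bij_betw f (fst G) (fst H)"
    and E: "snd H = (\<lambda>e. f ` e) ` snd G" and ij: "i \<in> fst G" "j \<in> fst G"
  shows "adj H (f i) (f j) = adj G i j"
proof -
  have inj: "inj_on f (fst G)" using f by (rule bij_betw_imp_inj_on)
  have sub: "\<And>e. e \<in> snd G \<Longrightarrow> e \<subseteq> fst G" using hg unfolding hypergraph_def by auto
  have inj_img: "inj_on ((`) f) {e\<in>snd G. i \<in> e \<and> j \<in> e}"
    by (rule inj_onI) (metis (no_types, lifting) inj inj_on_image_eq_iff mem_Collect_eq sub)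
  have "f i \<in> f ` e \<longleftrightarrow> i \<in> e" "f j \<in> f ` e \<longleftrightarrow> j \<in> e" if "e \<in> snd G" for e
    using inj ij sub that by (meson inj_on_image_mem_iff)+
  then have "{e\<in>snd H. f i \<in> e \<and> f j \<in> e} = (`) f ` {e\<in>snd G. i \<in> e \<and> j \<in> e}"
    unfolding E by auto
  moreover have "card (f ` e) = card e" if "e \<in> snd G" for e
    using inj sub that by (meson card_image inj_on_subset)
  moreover have "f i = f j \<longleftrightarrow> i = j"
    using inj ij by (meson inj_on_eq_iff)
  ultimately show ?thesis
    unfolding adj_def by (simp add: sum.reindex[OF inj_img])
qed

lemma hg_eigenvalue_iso:
  assumes hg: "hypergraph G" and iso: "hg_iso G H" and mu: "hg_eigenvalue H mu"
  shows "hg_eigenvalue G mu"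
proof -
  obtain f where f: "bij_betw f (fst G) (fst H)" and E: "snd H = (\<lambda>e. f ` e) ` snd G"
    using iso unfolding hg_iso_def by blast
  obtain y where y0: "\<exists>v\<in>fst H. y v \<noteq> 0"
    and ye: "\<forall>i\<in>fst H. (\<Sum>j\<in>fst H. complex_of_real (adj H i j) * y j) = mu * y i"
    using mu unfolding hg_eigenvalue_def by blast
  show ?thesis
    unfolding hg_eigenvalue_def
  proof (intro exI[of _ "y \<circ> f"] conjI ballI)
    show "\<exists>v\<in>fst G. (y \<circ> f) v \<noteq> 0"
      using y0 f by (metis bij_betw_imp_surj_on comp_apply imageE)
    fix i assume i: "i \<in> fst G"
    have "(\<Sum>j\<in>fst G. complex_of_real (adj G i j) * (y \<circ> f) j) =
        (\<Sum>j\<in>fst G. complex_of_real (adj H (f i) (f j)) * y (f j))"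
      using adj_iso[OF hg f E i] by simp
    also have "\<dots> = (\<Sum>u\<in>fst H. complex_of_real (adj H (f i) u) * y u)"
      by (rule sum.reindex_bij_betw[OF f])
    also have "\<dots> = mu * (y \<circ> f) i"
      using ye f i by (simp add: bij_betwE)
    finally show "(\<Sum>j\<in>fst G. complex_of_real (adj G i j) * (y \<circ> f) j) = mu * (y \<circ> f) i" .
  qed
qed

section \<open>The Perron vector of \<open>U*\<close>\<close>

text \<open>With \<open>K = k - 1\<close>, \<open>t\<close> pendant edges, value \<open>1\<close> at the root and \<open>\<theta> = K \<lambda>\<close>, the eigenvector
  equations at a pendant vertex, at \<open>v\<close> and at an inner vertex of the 2-cycle are solved by the
  values below; the remaining equation at the root says that \<open>\<theta>\<close> is a zero of \<open>perron_defect\<close>.\<close>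

definition perron_pendant :: "real \<Rightarrow> real \<Rightarrow> real" where
  "perron_pendant K \<theta> = 1 / (\<theta> - K + 1)"

definition perron_v :: "real \<Rightarrow> real \<Rightarrow> real" where
  "perron_v K \<theta> = 2 * (\<theta> + 1) / (\<theta> * (\<theta> - K + 2) - 2 * (K - 1))"

definition perron_cycle :: "real \<Rightarrow> real \<Rightarrow> real" where
  "perron_cycle K \<theta> = (1 + perron_v K \<theta>) / (\<theta> - K + 2)"

definition perron_defect :: "real \<Rightarrow> real \<Rightarrow> real \<Rightarrow> real" where
  "perron_defect K t \<theta> =
     2 * perron_v K \<theta> + 2 * (K - 1) * perron_cycle K \<theta> + t * K * perron_pendant K \<theta> - \<theta>"

definition perron_root :: "real \<Rightarrow> real \<Rightarrow> real" where
  "perron_root K t = (SOME \<theta>. \<theta> > K \<and> perron_defect K t \<theta> = 0)"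

lemma perron_v_denom_pos:
  fixes K \<theta> :: real
  assumes "K \<ge> 2" "\<theta> \<ge> K"
  shows "\<theta> * (\<theta> - K + 2) - 2 * (K - 1) > 0"
proof -
  have "\<theta> * (\<theta> - K + 2) \<ge> K * 2" using assms by (intro mult_mono) auto
  then show ?thesis by simp
qed

lemma perron_defect_at_K_pos:
  assumes K: "K \<ge> 2" and t: "t \<ge> 0"
  shows "perron_defect K t K > 0"
proof -
  have "perron_v K K = K + 1"
    unfolding perron_v_def by (simp add: algebra_simps)
  then have "perron_defect K t K = K + 2 + (K - 1) * (K + 2) + t * K"
    unfolding perron_defect_def perron_cycle_def perron_pendant_def by (simp add: field_simps)
  moreover have "(K - 1) * (K + 2) \<ge> 0" "t * K \<ge> 0" using K t by simp_all
  ultimately show ?thesis using K by linarith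
qed

lemma perron_defect_large_neg:
  assumes K: "K \<ge> 2" and t: "t \<ge> 0"
  shows "perron_defect K t (2 * K + t + 6) < 0"
proof -
  define \<theta> where "\<theta> = 2 * K + t + 6"
  have d: "\<theta> - K + 2 = K + t + 8" "\<theta> - K + 1 = K + t + 7"
    unfolding \<theta>_def by simp_all
  have "\<theta> * (\<theta> - K + 2) \<ge> \<theta> * 10"
    using K t unfolding d by (intro mult_left_mono) (auto simp: \<theta>_def)
  moreover have "\<theta> \<ge> 2 * K + 6" "\<theta> \<ge> t + 10" unfolding \<theta>_def using K t by simp_all
  ultimately have denom: "2 * (\<theta> + 1) \<le> \<theta> * (\<theta> - K + 2) - 2 * (K - 1)"
    using K by (simp add: algebra_simps)
  moreover have "\<theta> * (\<theta> - K + 2) - 2 * (K - 1) > 0"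
    using perron_v_denom_pos[OF K] \<open>\<theta> \<ge> 2 * K + 6\<close> K by simp
  ultimately have v1: "perron_v K \<theta> \<le> 1"
    unfolding perron_v_def by (simp add: divide_le_eq_1_pos)
  have "perron_cycle K \<theta> \<le> 2 / (K + t + 8)"
    unfolding perron_cycle_def d using v1 K t by (intro divide_right_mono) auto
  then have "2 * (K - 1) * perron_cycle K \<theta> \<le> 2 * (K - 1) * (2 / (K + t + 8))"
    using K by (intro mult_left_mono) auto
  also have "\<dots> < 4"
    using K t by (simp add: field_simps)
  finally have cycle: "2 * (K - 1) * perron_cycle K \<theta> < 4" .
  have "t * K * perron_pendant K \<theta> = t * (K / (K + t + 7))"
    unfolding perron_pendant_def d by simp
  also have "\<dots> \<le> t"
    using K t by (intro mult_left_le) auto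
  finally have pendant: "t * K * perron_pendant K \<theta> \<le> t" .
  show ?thesis
    using v1 cycle pendant \<open>\<theta> \<ge> t + 10\<close> unfolding perron_defect_def \<theta>_def[symmetric] by linarith
qed

lemma continuous_on_perron_defect:
  assumes K: "K \<ge> 2"
  shows "continuous_on {K..M} (perron_defect K t)"
proof -
  have "\<theta> - K + 1 \<noteq> 0" "\<theta> - K + 2 \<noteq> 0" "\<theta> * (\<theta> - K + 2) - 2 * (K - 1) \<noteq> 0"
    if "\<theta> \<in> {K..M}" for \<theta>
    using that perron_v_denom_pos[OF K, of \<theta>] by auto
  then show ?thesis
    unfolding perron_defect_def perron_v_def perron_cycle_def perron_pendant_def
    by (intro continuous_intros) auto
qed

lemma perron_root:
  assumes K: "K \<ge> 2" and t: "t \<ge> 0"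
  shows "perron_root K t > K" "perron_defect K t (perron_root K t) = 0"
proof -
  obtain \<theta> where "K \<le> \<theta>" "perron_defect K t \<theta> = 0"
    using IVT2'[of "perron_defect K t" "2 * K + t + 6" 0 K] perron_defect_large_neg[OF K t]
      perron_defect_at_K_pos[OF K t] K t continuous_on_perron_defect[OF K]
    by auto
  moreover have "\<theta> \<noteq> K" using perron_defect_at_K_pos[OF K t] calculation by auto
  ultimately have "\<exists>\<theta>. \<theta> > K \<and> perron_defect K t \<theta> = 0"
    by (metis order_le_neq_trans)
  then show "perron_root K t > K" "perron_defect K t (perron_root K t) = 0"
    unfolding perron_root_def by (metis (mono_tags, lifting) someI_ex)+
qed

context
  fixes K t :: real
  assumes K: "K \<ge> 2" and t: "t \<ge> 0"
begin

private abbreviation "\<theta> \<equiv> perron_root K t"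
private abbreviation "a \<equiv> perron_v K \<theta>"
private abbreviation "b \<equiv> perron_cycle K \<theta>"
private abbreviation "z \<equiv> perron_pendant K \<theta>"

lemma perron_root_equations:
  shows "\<theta> = 2 * a + 2 * (K - 1) * b + t * K * z"
    and "\<theta> * a = 2 * (1 + (K - 1) * b)"
    and "\<theta> * b = 1 + a + (K - 2) * b"
    and "\<theta> * z = 1 + (K - 1) * z"
proof -
  have gt: "\<theta> > K" and root: "perron_defect K t \<theta> = 0" using perron_root[OF K t] by auto
  show "\<theta> = 2 * a + 2 * (K - 1) * b + t * K * z"
    using root unfolding perron_defect_def by simp
  have denom: "\<theta> * (\<theta> - K + 2) - 2 * (K - 1) > 0" using perron_v_denom_pos[OF K] gt by simp
  have b: "b * (\<theta> - K + 2) = 1 + a" unfolding perron_cycle_def using gt by simp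
  have "a * (\<theta> * (\<theta> - K + 2) - 2 * (K - 1)) = 2 * (\<theta> + 1)"
    unfolding perron_v_def using denom by simp
  then have "\<theta> * a * (\<theta> - K + 2) = 2 * (\<theta> - K + 2) + 2 * (K - 1) * (1 + a)"
    by (simp add: algebra_simps)
  also have "\<dots> = 2 * (1 + (K - 1) * b) * (\<theta> - K + 2)"
    using b by (simp add: algebra_simps flip: b)
  finally show "\<theta> * a = 2 * (1 + (K - 1) * b)" using gt by simp
  show "\<theta> * b = 1 + a + (K - 2) * b" using b by (simp add: algebra_simps flip: b)
  show "\<theta> * z = 1 + (K - 1) * z" unfolding perron_pendant_def using gt by (simp add: field_simps)
qed

lemma perron_values_bounds:
  shows "a > 0" "b > 0" "z > 0" "b < 1" "z < 1" "a \<le> 1" "t > 0 \<Longrightarrow> a < 1"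
proof -
  have gt: "\<theta> > K" using perron_root[OF K t] by simp
  have denom: "\<theta> * (\<theta> - K + 2) - 2 * (K - 1) > 0" using perron_v_denom_pos[OF K] gt by simp
  show a0: "a > 0" unfolding perron_v_def using denom gt K by simp
  show b0: "b > 0" unfolding perron_cycle_def using a0 gt by simp
  show z0: "z > 0" "z < 1" unfolding perron_pendant_def using gt by simp_all
  have "(\<theta> + 2) * (1 - a) = t * K * z"
    using perron_root_equations(1,2) by (simp add: algebra_simps)
  moreover have "\<theta> + 2 > 0" using gt K by simp
  moreover have "t * K * z \<ge> 0" "t > 0 \<Longrightarrow> t * K * z > 0" using t K z0 by simp_all
  ultimately show a1: "a \<le> 1" and "t > 0 \<Longrightarrow> a < 1"
    by (metis diff_ge_0_iff_ge zero_le_mult_iff linorder_not_less order_less_le,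
        metis diff_gt_0_iff_gt zero_less_mult_iff order_less_asym)
  have "b * 2 < b * (\<theta> - K + 2)" using b0 gt by (intro mult_strict_left_mono) auto
  moreover have "b * (\<theta> - K + 2) = 1 + a" unfolding perron_cycle_def using gt by simp
  ultimately show "b < 1" using a1 by linarith
qed

end

section \<open>The hypergraph \<open>U*\<close> on given vertex sets\<close>

text \<open>The vertices \<open>v\<^sub>1\<close>, \<open>v\<^sub>2\<close> of the 2-hypercycle are \<open>r\<close> and \<open>v\<close>, the other vertices of its
  two edges are \<open>I1\<close> and \<open>I2\<close>, and every \<open>B \<in> P\<close> gives the pendant edge \<open>insert r B\<close>.\<close>

definition ustar_graph :: "'a \<Rightarrow> 'a \<Rightarrow> 'a set \<Rightarrow> 'a set \<Rightarrow> 'a set set \<Rightarrow> 'a hypergraph" where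
  "ustar_graph r v I1 I2 P = (insert r (insert v (I1 \<union> I2 \<union> \<Union>P)),
     {insert r (insert v I1), insert r (insert v I2)} \<union> insert r ` P)"

lemma fst_ustar_graph: "fst (ustar_graph r v I1 I2 P) = insert r (insert v (I1 \<union> I2 \<union> \<Union>P))"
  and snd_ustar_graph: "snd (ustar_graph r v I1 I2 P) =
    {insert r (insert v I1), insert r (insert v I2)} \<union> insert r ` P"
  by (simp_all add: ustar_graph_def)

definition ustar_lambda :: "nat \<Rightarrow> nat \<Rightarrow> real" where
  "ustar_lambda k t = perron_root (real k - 1) (real t) / (real k - 1)"

locale ustar_data =
  fixes k :: nat and r v :: 'a and I1 I2 :: "'a set" and P :: "'a set set"
  assumes k3: "k \<ge> 3"
    and r_ne_v: "r \<noteq> v"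
    and finite_I1: "finite I1" and finite_I2: "finite I2"
    and card_I1: "card I1 = k - 2" and card_I2: "card I2 = k - 2"
    and disjoint_I1_I2: "I1 \<inter> I2 = {}"
    and r_notin: "r \<notin> I1 \<union> I2 \<union> \<Union>P" and v_notin: "v \<notin> I1 \<union> I2 \<union> \<Union>P"
    and disjoint_cycle_pendants: "(I1 \<union> I2) \<inter> \<Union>P = {}"
    and finite_P: "finite P" and card_pendant: "\<And>B. B \<in> P \<Longrightarrow> card B = k - 1"
    and disjoint_P: "disjoint P"
begin

abbreviation U where "U \<equiv> ustar_graph r v I1 I2 P"

lemma finite_pendant: "B \<in> P \<Longrightarrow> finite B"
  using card_pendant k3 by (intro card_ge_0_finite) simp

lemma hypergraph: "hypergraph U"
  and uniform: "uniform k U"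
proof -
  have "card (insert r (insert v I1)) = k" "card (insert r (insert v I2)) = k"
    using finite_I1 finite_I2 card_I1 card_I2 r_notin v_notin r_ne_v k3 by auto
  moreover have "card (insert r B) = k" if "B \<in> P" for B
    using that finite_pendant card_pendant r_notin k3 by auto
  ultimately show "hypergraph U" "uniform k U"
    using finite_I1 finite_I2 finite_P finite_pendant k3
    unfolding hypergraph_def uniform_def fst_ustar_graph snd_ustar_graph by auto
qed

lemma edges_at_root: "{e\<in>snd U. r \<in> e} = snd U"
  unfolding snd_ustar_graph by auto

lemma edges_at_v: "{e\<in>snd U. v \<in> e} = {insert r (insert v I1), insert r (insert v I2)}"
proof -
  have "v \<notin> insert r B" if "B \<in> P" for B
    using that v_notin r_ne_v by blast
  then show ?thesis unfolding snd_ustar_graph by auto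
qed

lemma edges_at_I1:
  assumes "i \<in> I1"
  shows "{e\<in>snd U. i \<in> e} = {insert r (insert v I1)}"
proof -
  have "i \<noteq> r" "i \<noteq> v" "i \<notin> I2" "i \<notin> \<Union>P"
    using assms r_notin v_notin disjoint_I1_I2 disjoint_cycle_pendants by blast+
  then show ?thesis unfolding snd_ustar_graph using assms by auto
qed

lemma edges_at_I2:
  assumes "i \<in> I2"
  shows "{e\<in>snd U. i \<in> e} = {insert r (insert v I2)}"
proof -
  have "i \<noteq> r" "i \<noteq> v" "i \<notin> I1" "i \<notin> \<Union>P"
    using assms r_notin v_notin disjoint_I1_I2 disjoint_cycle_pendants by blast+
  then show ?thesis unfolding snd_ustar_graph using assms by auto
qed

lemma edges_at_pendant:
  assumes "B \<in> P" "i \<in> B"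
  shows "{e\<in>snd U. i \<in> e} = {insert r B}"
proof (intro equalityI subsetI)
  fix e assume e: "e \<in> {e\<in>snd U. i \<in> e}"
  have "i \<noteq> r" "i \<noteq> v" "i \<notin> I1" "i \<notin> I2"
    using assms r_notin v_notin disjoint_cycle_pendants by blast+
  then obtain B' where "B' \<in> P" "e = insert r B'" "i \<in> B'"
    using e unfolding snd_ustar_graph by auto
  moreover from this have "B' = B"
    using disjointD[OF disjoint_P _ assms(1)] assms(2) by blast
  ultimately show "e \<in> {insert r B}" by simp
qed (use assms in \<open>auto simp: snd_ustar_graph\<close>)

lemma cycle_edges_distinct: "insert r (insert v I1) \<noteq> insert r (insert v I2)"
proof
  assume eq: "insert r (insert v I1) = insert r (insert v I2)"
  obtain x where x: "x \<in> I1" using card_I1 k3 by fastforce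
  then have "x \<in> insert r (insert v I2)" using eq by blast
  then show False using x disjoint_I1_I2 r_notin v_notin by auto
qed

lemma edge_without_v:
  assumes "e \<in> snd U" "v \<notin> e"
  shows "e \<in> insert r ` P"
proof -
  have "e \<in> {insert r (insert v I1), insert r (insert v I2)} \<union> insert r ` P"
    using assms(1) by (simp add: snd_ustar_graph)
  then show ?thesis using assms(2) by blast
qed

lemma adj_root_pos:
  assumes "j \<in> fst U" "j \<noteq> r"
  shows "adj U r j > 0"
proof -
  consider "j = v" | "j \<in> I1" | "j \<in> I2" | B where "B \<in> P" "j \<in> B"
    using assms unfolding fst_ustar_graph by blast
  then obtain e where "e \<in> snd U" "r \<in> e" "j \<in> e"
    unfolding snd_ustar_graph by cases blast+
  then show ?thesis using adj_pos[OF hypergraph] assms(2) by blast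
qed

definition perron_vector :: "'a \<Rightarrow> real" where
  "perron_vector x = (let K = real k - 1; \<theta> = perron_root K (card P) in
     if x = r then 1 else if x = v then perron_v K \<theta>
     else if x \<in> I1 \<union> I2 then perron_cycle K \<theta> else perron_pendant K \<theta>)"

context
  fixes K \<theta> a b z :: real
  defines "K \<equiv> real k - 1" and "\<theta> \<equiv> perron_root K (card P)"
    and "a \<equiv> perron_v K \<theta>" and "b \<equiv> perron_cycle K \<theta>" and "z \<equiv> perron_pendant K \<theta>"
begin

private lemma K2: "K \<ge> 2"
  unfolding K_def using k3 by simp

private lemma perron_vector_values:
  "perron_vector r = 1" "perron_vector v = a"
  "x \<in> I1 \<union> I2 \<Longrightarrow> perron_vector x = b" "B \<in> P \<Longrightarrow> x \<in> B \<Longrightarrow> perron_vector x = z"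
  using r_ne_v r_notin v_notin disjoint_cycle_pendants
  unfolding perron_vector_def K_def \<theta>_def a_def b_def z_def Let_def by auto

private lemma perron_vector_other: "x \<noteq> r \<Longrightarrow> x \<noteq> v \<Longrightarrow> perron_vector x = b \<or> perron_vector x = z"
  unfolding perron_vector_def K_def \<theta>_def a_def b_def z_def Let_def by auto

private lemma sum_perron_vector_cycle_edge:
  assumes "I \<in> {I1, I2}"
  shows "sum perron_vector (insert r (insert v I)) = 1 + a + (K - 1) * b"
proof -
  have "finite I" "r \<notin> I" "v \<notin> I" "card I = k - 2" "I \<subseteq> I1 \<union> I2"
    using assms finite_I1 finite_I2 r_notin v_notin card_I1 card_I2 by auto
  moreover have "real (k - 2) = K - 1" unfolding K_def using k3 by simp
  ultimately show ?thesis
    using perron_vector_values r_ne_v by (simp add: subset_eq)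
qed

private lemma sum_perron_vector_pendant_edge:
  assumes "B \<in> P"
  shows "sum perron_vector (insert r B) = 1 + K * z"
proof -
  have "real (card B) = K" unfolding K_def using card_pendant[OF assms] k3 by simp
  then show ?thesis
    using assms finite_pendant r_notin perron_vector_values by auto
qed

private lemma perron_vector_root_sum: "(\<Sum>e\<in>snd U. sum perron_vector e - 1) = \<theta>"
proof -
  let ?C1 = "insert r (insert v I1)" and ?C2 = "insert r (insert v I2)"
  let ?f = "\<lambda>e. sum perron_vector e - 1"
  have E: "snd U = insert ?C1 (insert ?C2 (insert r ` P))"
    unfolding snd_ustar_graph by blast
  have C1P: "?C1 \<notin> insert r ` P" "?C2 \<notin> insert r ` P"
    using r_ne_v v_notin by auto
  have inj: "inj_on (insert r) P"
    using r_notin by (intro inj_onI) (metis UnionI UnCI insert_ident)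
  have "(\<Sum>e\<in>snd U. ?f e) = ?f ?C1 + ?f ?C2 + (\<Sum>B\<in>P. ?f (insert r B))"
    unfolding E using cycle_edges_distinct C1P finite_P by (simp add: sum.reindex[OF inj])
  moreover have "?f ?C1 = a + (K - 1) * b" "?f ?C2 = a + (K - 1) * b"
    using sum_perron_vector_cycle_edge[of I1] sum_perron_vector_cycle_edge[of I2] by simp_all
  moreover have "(\<Sum>B\<in>P. ?f (insert r B)) = real (card P) * K * z"
    using sum_perron_vector_pendant_edge by simp
  ultimately show ?thesis
    using perron_root_equations(1)[OF K2, of "card P", folded \<theta>_def a_def b_def z_def] by simp
qed

private lemma perron_vector_neighbour_sum:
  assumes "i \<in> fst U"
  shows "(\<Sum>e\<in>{e\<in>snd U. i \<in> e}. sum perron_vector e - perron_vector i) = \<theta> * perron_vector i"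
proof -
  note eqs = perron_root_equations[OF K2, of "card P", folded \<theta>_def a_def b_def z_def]
  consider "i = r" | "i = v" | "i \<in> I1" | "i \<in> I2" | B where "B \<in> P" "i \<in> B"
    using assms unfolding fst_ustar_graph by blast
  then show ?thesis
  proof cases
    case 1
    then show ?thesis
      using perron_vector_root_sum edges_at_root perron_vector_values(1) by simp
  next
    case 2
    then show ?thesis
      using cycle_edges_distinct eqs(2) edges_at_v sum_perron_vector_cycle_edge perron_vector_values
      by simp
  next
    case 3
    then show ?thesis
      using eqs(3) edges_at_I1[OF 3] sum_perron_vector_cycle_edge[of I1] perron_vector_values(3)[of i]
      by (simp add: algebra_simps)
  next
    case 4
    then show ?thesis
      using eqs(3) edges_at_I2[OF 4] sum_perron_vector_cycle_edge[of I2] perron_vector_values(3)[of i]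
      by (simp add: algebra_simps)
  next
    case 5
    then show ?thesis
      using eqs(4) edges_at_pendant[OF 5] sum_perron_vector_pendant_edge[OF 5(1)]
        perron_vector_values(4)[OF 5]
      by (simp add: algebra_simps)
  qed
qed

lemma perron_vector_pos: "perron_vector x > 0"
  using perron_values_bounds[OF K2, of "card P", folded \<theta>_def a_def b_def z_def]
    perron_vector_values(1,2) perron_vector_other[of x]
  by (cases "x = r"; cases "x = v") auto

lemma perron_vector_lt_root:
  assumes "x \<noteq> r" "x = v \<Longrightarrow> P \<noteq> {}"
  shows "perron_vector x < 1"
proof -
  note bounds = perron_values_bounds[OF K2, of "card P", folded \<theta>_def a_def b_def z_def]
  have "real (card P) > 0" if "x = v"
    using assms(2)[OF that] finite_P by (simp add: card_gt_0_iff)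
  then show ?thesis
    using assms(1) bounds perron_vector_values(2) perron_vector_other[of x] by (cases "x = v") auto
qed

lemma perron_vector_eigen:
  assumes "i \<in> fst U"
  shows "(\<Sum>j\<in>fst U. adj U i j * perron_vector j) = ustar_lambda k (card P) * perron_vector i"
proof -
  have "(\<Sum>j\<in>fst U. adj U i j * perron_vector j) =
      (\<Sum>e\<in>{e\<in>snd U. i \<in> e}. (sum perron_vector e - perron_vector i) / K)"
    unfolding adj_sum_edges[OF hypergraph]
  proof (rule sum.cong[OF refl])
    fix e assume "e \<in> {e\<in>snd U. i \<in> e}"
    then have "finite e" "i \<in> e" "card e = k"
      using hypergraph_finite_edge[OF hypergraph] uniform unfolding uniform_def by auto
    then show "(\<Sum>j\<in>e - {i}. perron_vector j) / (real (card e) - 1) =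
        (sum perron_vector e - perron_vector i) / K"
      by (simp add: sum_diff1 K_def)
  qed
  also have "\<dots> = \<theta> / K * perron_vector i"
    using perron_vector_neighbour_sum[OF assms] by (simp add: sum_divide_distrib[symmetric])
  also have "\<theta> / K = ustar_lambda k (card P)"
    unfolding ustar_lambda_def K_def \<theta>_def by simp
  finally show ?thesis .
qed

end

lemma spectral_radius: "spectral_radius U = ustar_lambda k (card P)"
  and eigenvalue: "hg_eigenvalue U (ustar_lambda k (card P))"
  using spectral_radius_perron[OF hypergraph, of perron_vector] perron_vector_pos perron_vector_eigen
  by auto

lemma proportional_perron_vector:
  assumes "quad_form U w = ustar_lambda k (card P) * (\<Sum>i\<in>fst U. (w i)\<^sup>2)" "j \<in> fst U"
  shows "w j = w r * perron_vector j"
proof (cases "j = r")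
  case False
  have "r \<in> fst U" unfolding fst_ustar_graph by simp
  then have "w r * perron_vector j = w j * perron_vector r"
    using adj_root_pos[OF assms(2) False] perron_vector_pos perron_vector_eigen
    by (intro quad_form_eq_perron_imp_proportional[OF hypergraph _ _ assms(1) _ assms(2)]) auto
  then show ?thesis by (simp add: perron_vector_def)
qed (simp add: perron_vector_def)

end

lemma disjoint_family_bij:
  assumes P: "finite P" "disjoint P" "\<And>B. B \<in> P \<Longrightarrow> finite B \<and> card B = c"
    and P': "finite P'" "disjoint P'" "\<And>B. B \<in> P' \<Longrightarrow> finite B \<and> card B = c"
    and card: "card P = card P'"
  obtains f where "bij_betw f (\<Union>P) (\<Union>P')" "(`) f ` P = P'"
proof -
  obtain h where h: "bij_betw h P P'"
    using finite_same_card_bij[OF P(1) P'(1) card] by blast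
  have "\<exists>g. bij_betw g B (h B)" if "B \<in> P" for B
    using P(3)[OF that] P'(3)[OF bij_betw_apply[OF h that]] by (metis finite_same_card_bij)
  then obtain g where g: "\<And>B. B \<in> P \<Longrightarrow> bij_betw (g B) B (h B)" by metis
  define f where "f x = g (THE B. B \<in> P \<and> x \<in> B) x" for x
  have f: "bij_betw f B (h B)" if B: "B \<in> P" for B
  proof -
    have "(THE B. B \<in> P \<and> x \<in> B) = B" if "x \<in> B" for x
    proof (rule the_equality)
      fix B' assume "B' \<in> P \<and> x \<in> B'"
      then show "B' = B" using disjointD[OF P(2) _ B] that by blast
    qed (use B that in simp)
    then show ?thesis using g[OF B] by (simp add: f_def cong: bij_betw_cong)
  qed
  have "disjoint_family_on h P"
    unfolding disjoint_family_on_def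
  proof (intro ballI impI)
    fix B B' assume "B \<in> P" "B' \<in> P" "B \<noteq> B'"
    then have "h B \<noteq> h B'" "h B \<in> P'" "h B' \<in> P'"
      using h by (auto simp: bij_betw_def inj_on_def)
    then show "h B \<inter> h B' = {}" using disjointD[OF P'(2)] by blast
  qed
  then have "bij_betw f (\<Union>B\<in>P. B) (\<Union>B\<in>P. h B)"
    by (rule bij_betw_UNION_disjoint) (rule f)
  moreover have "(\<Union>B\<in>P. h B) = \<Union>P'"
    using h by (simp add: bij_betw_def)
  moreover have "(`) f ` P = P'"
  proof -
    have "(`) f ` P = h ` P" using f by (auto simp: bij_betw_def)
    then show ?thesis using h by (simp add: bij_betw_def)
  qed
  ultimately show ?thesis using that by simp
qed

lemma hg_iso_ustar_graph:
  assumes "bij_betw f (fst (ustar_graph r v I1 I2 P)) (fst (ustar_graph r' v' I1' I2' P'))"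
    and "f r = r'" "f v = v'" "f ` I1 = I1'" "f ` I2 = I2'" "(`) f ` P = P'"
  shows "hg_iso (ustar_graph r v I1 I2 P) (ustar_graph r' v' I1' I2' P')"
proof -
  have "snd (ustar_graph r' v' I1' I2' P') = (`) f ` snd (ustar_graph r v I1 I2 P)"
    unfolding snd_ustar_graph assms(2-6)[symmetric] by (simp add: image_image)
  then show ?thesis using assms(1) unfolding hg_iso_def by blast
qed

lemma ustar_graph_iso:
  assumes U: "ustar_data k r v I1 I2 P" and U': "ustar_data k r' v' I1' I2' P'"
    and card: "card P = card P'"
  shows "hg_iso (ustar_graph r v I1 I2 P) (ustar_graph r' v' I1' I2' P')"
proof -
  interpret U: ustar_data k r v I1 I2 P by (fact U)
  interpret U': ustar_data k r' v' I1' I2' P' by (fact U')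
  obtain g1 where g1: "bij_betw g1 I1 I1'"
    using finite_same_card_bij[OF U.finite_I1 U'.finite_I1] U.card_I1 U'.card_I1 by auto
  obtain g2 where g2: "bij_betw g2 I2 I2'"
    using finite_same_card_bij[OF U.finite_I2 U'.finite_I2] U.card_I2 U'.card_I2 by auto
  have "finite B \<and> card B = k - 1" if "B \<in> P" for B
    using U.finite_pendant U.card_pendant that by blast
  moreover have "finite B \<and> card B = k - 1" if "B \<in> P'" for B
    using U'.finite_pendant U'.card_pendant that by blast
  ultimately obtain h where h: "bij_betw h (\<Union>P) (\<Union>P')" "(`) h ` P = P'"
    using disjoint_family_bij[OF U.finite_P U.disjoint_P _ U'.finite_P U'.disjoint_P _ card] by blast
  define f where "f x = (if x = r then r' else if x = v then v' else if x \<in> I1 then g1 x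
      else if x \<in> I2 then g2 x else h x)" for x
  have fr: "f r = r'" and fv: "f v = v'"
    using U.r_ne_v by (simp_all add: f_def)
  have "f x = g1 x" if "x \<in> I1" for x
    using that U.r_notin U.v_notin by (auto simp: f_def)
  then have f1: "bij_betw f I1 I1'" using bij_betw_cong[of I1 f g1 I1'] g1 by blast
  have "f x = g2 x" if "x \<in> I2" for x
    using that U.r_notin U.v_notin U.disjoint_I1_I2 by (auto simp: f_def)
  then have f2: "bij_betw f I2 I2'" using bij_betw_cong[of I2 f g2 I2'] g2 by blast
  have fh: "f x = h x" if "x \<in> \<Union>P" for x
  proof -
    have "x \<noteq> r" "x \<noteq> v" "x \<notin> I1" "x \<notin> I2"
      using that U.r_notin U.v_notin U.disjoint_cycle_pendants by blast+
    then show ?thesis by (simp add: f_def)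
  qed
  then have fP: "bij_betw f (\<Union>P) (\<Union>P')" using bij_betw_cong[of "\<Union>P" f h "\<Union>P'"] h(1) by blast
  have "(`) f ` P = (`) h ` P"
    using fh by (intro image_cong refl) auto
  then have fP': "(`) f ` P = P'" using h(2) by simp
  have "bij_betw f ({r} \<union> ({v} \<union> (I1 \<union> (I2 \<union> \<Union>P)))) ({r'} \<union> ({v'} \<union> (I1' \<union> (I2' \<union> \<Union>P'))))"
  proof (intro bij_betw_combine)
    show "bij_betw f {r} {r'}" "bij_betw f {v} {v'}" using fr fv by simp_all
  qed (use f1 f2 fP U'.r_ne_v U'.r_notin U'.v_notin U'.disjoint_I1_I2 U'.disjoint_cycle_pendants in auto)
  moreover have "fst (ustar_graph r v I1 I2 P) = {r} \<union> ({v} \<union> (I1 \<union> (I2 \<union> \<Union>P)))"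
    "fst (ustar_graph r' v' I1' I2' P') = {r'} \<union> ({v'} \<union> (I1' \<union> (I2' \<union> \<Union>P')))"
    unfolding fst_ustar_graph by auto
  ultimately show ?thesis
    using fr fv f1 f2 fP' by (intro hg_iso_ustar_graph) (simp_all add: bij_betw_def)
qed

lemma UN_intervals_mult:
  fixes c d :: nat
  shows "(\<Union>j<q. {c + j * d..<c + (j + 1) * d}) = {c..<c + q * d}"
proof (induction q)
  case (Suc q)
  have "{c..<c + q * d} \<union> {c + q * d..<c + (q + 1) * d} = {c..<c + (q + 1) * d}"
    by (rule ivl_disj_un_two(3)) simp_all
  with Suc show ?case by (simp add: lessThan_Suc Un_commute)
qed simp

lemma intervals_mult_disjoint:
  fixes c d :: nat
  assumes "j \<noteq> j'"
  shows "{c + j * d..<c + (j + 1) * d} \<inter> {c + j' * d..<c + (j' + 1) * d} = {}"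
proof -
  consider "j + 1 \<le> j'" | "j' + 1 \<le> j" using assms by linarith
  then have "(j + 1) * d \<le> j' * d \<or> (j' + 1) * d \<le> j * d"
    by cases (use mult_le_mono1[of "j + 1" j' d] mult_le_mono1[of "j' + 1" j d] in auto)
  then show ?thesis by auto
qed

lemma Ustar_eq_ustar_graph:
  assumes k: "k \<ge> 3" and m: "m \<ge> 2"
  defines "P \<equiv> (\<lambda>j. {2 * k - 2 + j * (k - 1)..<2 * k - 2 + (j + 1) * (k - 1)}) ` {..<m - 2}"
  shows "Ustar k ((k - 1) * m) = ustar_graph 0 1 {2..<k} {k..<2 * k - 2} P"
    and "ustar_data k (0::nat) 1 {2..<k} {k..<2 * k - 2} P"
    and "card P = m - 2"
proof -
  let ?B = "\<lambda>j. {2 * k - 2 + j * (k - 1)..<2 * k - 2 + (j + 1) * (k - 1)}"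
  have n: "2 * k - 2 + (m - 2) * (k - 1) = (k - 1) * m"
  proof -
    define a b where "a = k - 1" and "b = m - 2"
    have "k = a + 1" "m = b + 2" using k m unfolding a_def b_def by simp_all
    then show ?thesis by (simp add: algebra_simps)
  qed
  have UP: "\<Union>P = {2 * k - 2..<(k - 1) * m}"
    unfolding P_def using UN_intervals_mult[of "2 * k - 2" "k - 1" "m - 2"] n by simp
  have card: "card (?B j) = k - 1" for j
    by simp
  have disj: "?B j \<inter> ?B j' = {}" if "j \<noteq> j'" for j j'
    using intervals_mult_disjoint[OF that] .
  have "inj_on ?B {..<m - 2}"
  proof (rule inj_onI, rule ccontr)
    fix j j' assume "?B j = ?B j'" "j \<noteq> j'"
    then have "?B j = {}" using disj[OF \<open>j \<noteq> j'\<close>] by simp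
    then show False using card[of j] k by simp
  qed
  then show card_P: "card P = m - 2" unfolding P_def by (simp add: card_image)
  show "ustar_data k (0::nat) 1 {2..<k} {k..<2 * k - 2} P"
  proof
    have "disjoint_family_on ?B {..<m - 2}"
      unfolding disjoint_family_on_def using disj by blast
    then show "disjoint P"
      unfolding P_def by (rule disjoint_family_on_disjoint_image)
    show "card B = k - 1" if "B \<in> P" for B
      using that card unfolding P_def by auto
    show "finite P" unfolding P_def by simp
  qed (use k UP in auto)
  have "2 * k - 2 \<le> (k - 1) * m" using n by linarith
  then have V: "{0..<(k - 1) * m} = insert 0 (insert 1 ({2..<k} \<union> {k..<2 * k - 2} \<union> \<Union>P))"
    unfolding UP using k m by auto
  have E: "{insert 0 (?B j) |j. j < (k - 1) * m div (k - 1) - 2} = insert 0 ` P"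
    using k unfolding P_def by auto
  show "Ustar k ((k - 1) * m) = ustar_graph 0 1 {2..<k} {k..<2 * k - 2} P"
    unfolding Ustar_def ustar_graph_def V E by simp
qed

section \<open>Growing a connected hypergraph from a root\<close>

lemma list_exit_index:
  assumes "xs \<noteq> []" "hd xs \<in> X" "last xs \<notin> X"
  shows "\<exists>i. Suc i < length xs \<and> xs ! i \<in> X \<and> xs ! Suc i \<notin> X"
  using assms
proof (induction xs)
  case (Cons a xs)
  show ?case
  proof (cases "xs = []")
    case False
    show ?thesis
    proof (cases "hd xs \<in> X")
      case True
      then obtain i where "Suc i < length xs" "xs ! i \<in> X" "xs ! Suc i \<notin> X"
        using Cons False by auto
      then show ?thesis by (intro exI[of _ "Suc i"]) simp
    next
      case False
      then show ?thesis
        using Cons.prems \<open>xs \<noteq> []\<close> by (intro exI[of _ 0]) (simp add: hd_conv_nth)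
    qed
  qed (use Cons.prems in simp)
qed simp

lemma hg_connected_edge_leaving:
  assumes conn: "hg_connected G" and X: "r \<in> X" "X \<subseteq> fst G" "X \<noteq> fst G"
  shows "\<exists>e\<in>snd G. e \<inter> X \<noteq> {} \<and> e - X \<noteq> {}"
proof -
  obtain u where u: "u \<in> fst G" "u \<notin> X" using X by auto
  then obtain vs es where path: "hyperpath G vs es" "hd vs = r" "last vs = u"
    using conn X unfolding hg_connected_def by blast
  then have len: "length vs = Suc (length es)" unfolding hyperpath_def by simp
  then have "vs \<noteq> []" by auto
  then obtain i where i: "Suc i < length vs" "vs ! i \<in> X" "vs ! Suc i \<notin> X"
    using list_exit_index[of vs X] path(2,3) X(1) u(2) by auto
  then have "es ! i \<in> snd G" "vs ! i \<in> es ! i" "vs ! Suc i \<in> es ! i"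
    using path(1) len unfolding hyperpath_def by auto
  then show ?thesis using i by blast
qed

text \<open>The state of a search from the root \<open>r\<close> that has reached the vertex set \<open>X\<close>: \<open>Q e\<close> is the
  set of vertices first reached through the edge \<open>e\<close>, so \<open>e\<close> keeps a vertex outside \<open>Q e\<close>.\<close>

definition rooted_partition_on :: "'a hypergraph \<Rightarrow> 'a \<Rightarrow> 'a set \<Rightarrow> ('a set \<Rightarrow> 'a set) \<Rightarrow> bool" where
  "rooted_partition_on G r X Q \<longleftrightarrow> r \<in> X \<and> X \<subseteq> fst G \<and>
     (\<forall>e\<in>snd G. Q e \<subseteq> e \<inter> X \<and> e - Q e \<noteq> {} \<and> (Q e \<noteq> {} \<longrightarrow> e \<subseteq> X)) \<and>
     (\<forall>e\<in>snd G. \<forall>e'\<in>snd G. e \<noteq> e' \<longrightarrow> Q e \<inter> Q e' = {}) \<and>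
     (\<Union>e\<in>snd G. Q e) = X - {r}"

lemma rooted_partition_on_extend:
  assumes hg: "hypergraph G" and conn: "hg_connected G"
    and Q: "rooted_partition_on G r X Q" and X: "X \<noteq> fst G"
  shows "\<exists>X' Q'. rooted_partition_on G r X' Q' \<and> X \<subset> X'"
proof -
  have r: "r \<in> X" and XV: "X \<subseteq> fst G"
    and sub: "\<And>e. e \<in> snd G \<Longrightarrow> Q e \<subseteq> e \<inter> X \<and> e - Q e \<noteq> {} \<and> (Q e \<noteq> {} \<longrightarrow> e \<subseteq> X)"
    and disj: "\<And>e e'. e \<in> snd G \<Longrightarrow> e' \<in> snd G \<Longrightarrow> e \<noteq> e' \<Longrightarrow> Q e \<inter> Q e' = {}"
    and UN: "(\<Union>e\<in>snd G. Q e) = X - {r}"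
    using Q unfolding rooted_partition_on_def by simp_all
  obtain e where e: "e \<in> snd G" "e \<inter> X \<noteq> {}" "e - X \<noteq> {}"
    using hg_connected_edge_leaving[OF conn r XV X] by blast
  then have Qe: "Q e = {}" using sub by blast
  have eV: "e \<subseteq> fst G" using hg e(1) unfolding hypergraph_def by blast
  define Q' where "Q' = Q(e := e - X)"
  have "Q' f \<subseteq> f \<inter> (X \<union> e) \<and> f - Q' f \<noteq> {} \<and> (Q' f \<noteq> {} \<longrightarrow> f \<subseteq> X \<union> e)"
    if "f \<in> snd G" for f
  proof (cases "f = e")
    case True
    then show ?thesis using e(2) unfolding Q'_def by auto
  next
    case False
    then show ?thesis using sub[OF that] unfolding Q'_def by auto
  qed
  moreover have "Q' f \<inter> Q' f' = {}" if "f \<in> snd G" "f' \<in> snd G" "f \<noteq> f'" for f f'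
  proof -
    have "Q f \<subseteq> X" "Q f' \<subseteq> X" using sub that(1,2) by auto
    then show ?thesis using disj[OF that] that(3) unfolding Q'_def by auto
  qed
  moreover have "(\<Union>f\<in>snd G. Q' f) = X \<union> e - {r}"
  proof -
    have "(\<Union>f\<in>snd G. Q' f) = (e - X) \<union> (\<Union>f\<in>snd G - {e}. Q f)"
      using e(1) unfolding Q'_def by auto
    also have "(\<Union>f\<in>snd G - {e}. Q f) = X - {r}"
      using UN Qe by blast
    finally show ?thesis using r by blast
  qed
  ultimately have "rooted_partition_on G r (X \<union> e) Q'"
    unfolding rooted_partition_on_def using r XV eV by blast
  moreover have "X \<subset> X \<union> e" using e(3) by blast
  ultimately show ?thesis by blast
qed

lemma rooted_partition_exists:
  assumes hg: "hypergraph G" and conn: "hg_connected G" and r: "r \<in> fst G"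
  obtains Q where "rooted_partition_on G r (fst G) Q"
proof -
  have "\<exists>Q'. rooted_partition_on G r (fst G) Q'" if "rooted_partition_on G r X Q" for X Q
    using that
  proof (induction "card (fst G - X)" arbitrary: X Q rule: less_induct)
    case less
    show ?case
    proof (cases "X = fst G")
      case False
      then obtain X' Q' where Q': "rooted_partition_on G r X' Q'" and "X \<subset> X'"
        using rooted_partition_on_extend[OF hg conn less.prems] by blast
      moreover have "X' \<subseteq> fst G" "finite (fst G)"
        using Q' hg unfolding rooted_partition_on_def hypergraph_def by auto
      ultimately have "card (fst G - X') < card (fst G - X)"
        by (intro psubset_card_mono) auto
      then show ?thesis using less.hyps Q' by blast
    qed (use less.prems in blast)
  qed
  moreover have "rooted_partition_on G r {r} (\<lambda>_. {})"
    using hg r unfolding rooted_partition_on_def hypergraph_def by fastforce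
  ultimately show ?thesis using that by blast
qed

lemma sum_bounded_deficit_one:
  fixes f :: "'a \<Rightarrow> nat"
  assumes "finite A" "\<And>x. x \<in> A \<Longrightarrow> f x \<le> c" "sum f A + 1 = c * card A"
  obtains s where "s \<in> A" "f s + 1 = c" "\<And>x. x \<in> A \<Longrightarrow> x \<noteq> s \<Longrightarrow> f x = c"
proof -
  have "(\<Sum>x\<in>A. c - f x) = c * card A - sum f A"
    using sum_subtractf_nat[of A f "\<lambda>_. c"] assms(2) by (simp add: mult.commute)
  also have "\<dots> = 1" using assms(3) by simp
  finally have "(\<Sum>x\<in>A. c - f x) = 1" .
  from sum_eq_1_iff[OF assms(1), THEN iffD1, OF this]
  obtain s where s: "s \<in> A" "c - f s = 1" and others: "\<forall>x\<in>A. s \<noteq> x \<longrightarrow> c - f x = 0"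
    by blast
  have "f s + 1 = c" using s assms(2)[OF s(1)] by linarith
  moreover have "f x = c" if "x \<in> A" "x \<noteq> s" for x
    using others that assms(2)[OF that(1)] by fastforce
  ultimately show ?thesis using that s(1) by blast
qed

lemma unicyclic_edges_ge_2:
  assumes G: "unicyclic k G"
  shows "card (snd G) \<ge> 2"
proof (rule ccontr)
  assume "\<not> card (snd G) \<ge> 2"
  moreover have "card (snd G) \<noteq> 0"
    using G unfolding unicyclic_def hypergraph_def by auto
  ultimately have "card (snd G) = 1" by linarith
  then obtain e where e: "snd G = {e}" by (rule card_1_singletonE)
  then have "e \<subseteq> fst G" "card e = k" "card e \<ge> 2" "finite (fst G)"
    using G unfolding unicyclic_def hypergraph_def uniform_def by auto
  then have "k \<le> card (fst G)" using card_mono by fastforce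
  then show False using G e \<open>card e = k\<close> \<open>card e \<ge> 2\<close> unfolding unicyclic_def by simp
qed

lemma unicyclic_special_edge:
  assumes G: "unicyclic k G" and Q: "rooted_partition_on G r (fst G) Q"
  obtains s where "s \<in> snd G" "card (Q s) = k - 2" "\<And>e. e \<in> snd G \<Longrightarrow> e \<noteq> s \<Longrightarrow> card (Q e) = k - 1"
proof -
  have hg: "hypergraph G" and cV: "card (fst G) = (k - 1) * card (snd G)"
    and ck: "\<And>e. e \<in> snd G \<Longrightarrow> card e = k"
    using G unfolding unicyclic_def uniform_def by auto
  have sub: "\<And>e. e \<in> snd G \<Longrightarrow> Q e \<subseteq> e \<and> e - Q e \<noteq> {}"
    and disj: "\<forall>e\<in>snd G. \<forall>e'\<in>snd G. e \<noteq> e' \<longrightarrow> Q e \<inter> Q e' = {}"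
    and UN: "(\<Union>e\<in>snd G. Q e) = fst G - {r}" and r: "r \<in> fst G"
    using Q unfolding rooted_partition_on_def by auto
  have fin: "finite (snd G)" "\<And>e. e \<in> snd G \<Longrightarrow> finite e" "finite (fst G)"
    using hypergraph_finite_edges[OF hg] hypergraph_finite_edge[OF hg] hg
    unfolding hypergraph_def by auto
  have "card (Q e) < card e" if "e \<in> snd G" for e
    using sub[OF that] fin(2)[OF that] by (intro psubset_card_mono) auto
  then have le: "card (Q e) \<le> k - 1" if "e \<in> snd G" for e
    using ck that by fastforce
  have "(\<Sum>e\<in>snd G. card (Q e)) = card (\<Union>e\<in>snd G. Q e)"
    using fin sub disj by (intro card_UN_disjoint[symmetric]) (auto intro: finite_subset)
  also have "\<dots> = card (fst G) - 1"
    using UN r fin(3) by simp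
  finally have "(\<Sum>e\<in>snd G. card (Q e)) = card (fst G) - 1" .
  moreover have "card (fst G) > 0" using r fin(3) card_gt_0_iff by blast
  ultimately have "(\<Sum>e\<in>snd G. card (Q e)) + 1 = (k - 1) * card (snd G)"
    using cV by linarith
  then obtain s where "s \<in> snd G" "card (Q s) + 1 = k - 1"
    "\<And>e. e \<in> snd G \<Longrightarrow> e \<noteq> s \<Longrightarrow> card (Q e) = k - 1"
    using sum_bounded_deficit_one[of "snd G" "\<lambda>e. card (Q e)" "k - 1"] fin(1) le by blast
  then show ?thesis using that by simp
qed

section \<open>Rerooting a unicyclic hypergraph onto \<open>U*\<close>\<close>

text \<open>The edge \<open>s\<close> keeps the two vertices \<open>v \<noteq> r\<close> and \<open>u\<close> outside \<open>Q s\<close>, and \<open>t\<close> is the edge through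
  which \<open>v\<close> was discovered. Moving \<open>u\<close> out of \<open>s\<close> and the entry vertex out of every other edge,
  and putting \<open>r\<close> in its place, yields \<open>U*\<close> with cycle edges coming from \<open>t\<close> and \<open>s\<close>.\<close>

locale unicyclic_rooted =
  fixes k :: nat and G :: "'a hypergraph" and r :: 'a and Q :: "'a set \<Rightarrow> 'a set"
    and s t :: "'a set" and v u :: 'a
  assumes k3: "k \<ge> 3" and unicyclic: "unicyclic k G"
    and partition: "rooted_partition_on G r (fst G) Q"
    and special_edge: "s \<in> snd G" "card (Q s) = k - 2"
    and ordinary_edge: "\<And>e. e \<in> snd G \<Longrightarrow> e \<noteq> s \<Longrightarrow> card (Q e) = k - 1"
    and special_rest: "s - Q s = {v, u}" "v \<noteq> u" "v \<noteq> r"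
    and cycle_edge: "t \<in> snd G" "v \<in> Q t"
begin

lemma Q_subset: "e \<in> snd G \<Longrightarrow> Q e \<subseteq> e"
  and Q_disjoint: "e \<in> snd G \<Longrightarrow> e' \<in> snd G \<Longrightarrow> e \<noteq> e' \<Longrightarrow> Q e \<inter> Q e' = {}"
  and UN_Q: "(\<Union>e\<in>snd G. Q e) = fst G - {r}"
  and root: "r \<in> fst G"
  using partition unfolding rooted_partition_on_def by simp_all

lemma root_notin_Q: "e \<in> snd G \<Longrightarrow> r \<notin> Q e"
  using UN_Q by blast

lemma finite_Q: "e \<in> snd G \<Longrightarrow> finite (Q e)"
  using unicyclic Q_subset unfolding unicyclic_def by (meson hypergraph_finite_edge finite_subset)

lemma Q_nonempty: "e \<in> snd G \<Longrightarrow> Q e \<noteq> {}"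
  using special_edge ordinary_edge k3 by (cases "e = s") fastforce+

lemma t_ne_s: "t \<noteq> s"
  using special_rest(1) cycle_edge(2) by blast

lemma v_notin_Q: "e \<in> snd G \<Longrightarrow> e \<noteq> t \<Longrightarrow> v \<notin> Q e"
  using Q_disjoint cycle_edge by blast

definition moved :: "'a set \<Rightarrow> 'a" where
  "moved e = (if e = s then u else the_elem (e - Q e))"

lemma ordinary_edge_rest:
  assumes e: "e \<in> snd G" "e \<noteq> s"
  shows "e - Q e = {moved e}"
proof -
  have "card e = k" "finite e"
    using unicyclic e(1) unfolding unicyclic_def uniform_def by (auto intro: hypergraph_finite_edge)
  then have "card (e - Q e) = 1"
    using ordinary_edge[OF e] Q_subset[OF e(1)] finite_Q[OF e(1)] k3 by (simp add: card_Diff_subset)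
  then obtain a where "e - Q e = {a}" by (rule card_1_singletonE)
  then show ?thesis using e(2) unfolding moved_def by simp
qed

lemma moved_in_edge: "e \<in> snd G \<Longrightarrow> moved e \<in> e"
  using ordinary_edge_rest special_rest(1) unfolding moved_def by (cases "e = s") auto

lemma edge_minus_moved:
  assumes e: "e \<in> snd G"
  shows "e - {moved e} = (if e = s then insert v (Q s) else Q e)"
proof (cases "e = s")
  case True
  then show ?thesis using special_rest Q_subset[OF e] unfolding moved_def by auto
next
  case False
  then show ?thesis using ordinary_edge_rest[OF e False] Q_subset[OF e] by auto
qed

lemma root_notin_edge_minus_moved: "e \<in> snd G \<Longrightarrow> r \<notin> e - {moved e}"
  using edge_minus_moved root_notin_Q special_edge(1) special_rest(3) by (cases "e = s") auto

lemma ustar_data: "ustar_data k r v (Q t - {v}) (Q s) (Q ` (snd G - {s, t}))"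
proof
  show "card (Q t - {v}) = k - 2"
    using ordinary_edge[OF cycle_edge(1) t_ne_s] cycle_edge finite_Q by simp
  have "disjoint_family_on Q (snd G - {s, t})"
    unfolding disjoint_family_on_def using Q_disjoint by blast
  then show "disjoint (Q ` (snd G - {s, t}))"
    by (rule disjoint_family_on_disjoint_image)
  show "finite (Q ` (snd G - {s, t}))"
    using unicyclic hypergraph_finite_edges unfolding unicyclic_def by blast
  show "card B = k - 1" if "B \<in> Q ` (snd G - {s, t})" for B
    using that ordinary_edge by auto
  show "(Q t - {v}) \<inter> Q s = {}"
    using Q_disjoint[OF cycle_edge(1) special_edge(1) t_ne_s] by blast
  show "r \<notin> (Q t - {v}) \<union> Q s \<union> \<Union> (Q ` (snd G - {s, t}))"
    using root_notin_Q special_edge(1) cycle_edge(1) by blast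
  show "v \<notin> (Q t - {v}) \<union> Q s \<union> \<Union> (Q ` (snd G - {s, t}))"
    using v_notin_Q special_edge(1) t_ne_s by blast
  show "((Q t - {v}) \<union> Q s) \<inter> \<Union> (Q ` (snd G - {s, t})) = {}"
    using Q_disjoint special_edge(1) cycle_edge(1) by blast
qed (use k3 special_edge special_rest finite_Q cycle_edge in auto)

lemma inj_on_Q: "inj_on Q (snd G)"
proof (rule inj_onI, rule ccontr)
  fix e e' assume "e \<in> snd G" "e' \<in> snd G" "Q e = Q e'" "e \<noteq> e'"
  then show False using Q_disjoint Q_nonempty by (metis Int_absorb)
qed

lemma card_pendants: "card (Q ` (snd G - {s, t})) = card (snd G) - 2"
proof -
  have "finite (snd G)"
    using unicyclic hypergraph_finite_edges unfolding unicyclic_def by blast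
  then show ?thesis
    using card_image[OF inj_on_subset[OF inj_on_Q]] special_edge(1) cycle_edge(1) t_ne_s
    by (simp add: card_Diff_subset)
qed

lemma fst_rerooted: "fst (ustar_graph r v (Q t - {v}) (Q s) (Q ` (snd G - {s, t}))) = fst G"
proof -
  have "insert v ((Q t - {v}) \<union> Q s \<union> \<Union> (Q ` (snd G - {s, t}))) = (\<Union>e\<in>snd G. Q e)"
    using special_edge(1) cycle_edge by auto
  then show ?thesis
    unfolding fst_ustar_graph UN_Q using root by auto
qed

lemma snd_rerooted:
  "snd (ustar_graph r v (Q t - {v}) (Q s) (Q ` (snd G - {s, t}))) =
    (\<lambda>e. insert r (e - {moved e})) ` snd G"
proof -
  have "snd G = insert t (insert s (snd G - {s, t}))"
    using special_edge(1) cycle_edge(1) by blast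
  moreover have "insert r (t - {moved t}) = insert r (insert v (Q t - {v}))"
    using edge_minus_moved[OF cycle_edge(1)] t_ne_s cycle_edge(2) by auto
  moreover have "insert r (s - {moved s}) = insert r (insert v (Q s))"
    using edge_minus_moved[OF special_edge(1)] by simp
  moreover have "(\<lambda>e. insert r (e - {moved e})) ` (snd G - {s, t}) = insert r ` Q ` (snd G - {s, t})"
    using edge_minus_moved by (auto simp: image_image)
  ultimately show ?thesis
    unfolding snd_ustar_graph by (metis (no_types, lifting) image_insert insert_is_Un sup_assoc)
qed

lemma inj_on_rerooted: "inj_on (\<lambda>e. insert r (e - {moved e})) (snd G)"
proof (rule inj_onI, rule ccontr)
  fix e e' assume e: "e \<in> snd G" "e' \<in> snd G" and eq: "insert r (e - {moved e}) = insert r (e' - {moved e'})"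
    and "e \<noteq> e'"
  have bounds: "Q f \<subseteq> insert r (f - {moved f})" "insert r (f - {moved f}) \<subseteq> insert r (insert v (Q f))"
    if "f \<in> snd G" for f
    using edge_minus_moved[OF that] by (auto split: if_splits)
  have "Q e \<subseteq> insert r (insert v (Q e'))" "Q e' \<subseteq> insert r (insert v (Q e))"
    using bounds[OF e(1)] bounds[OF e(2)] eq by blast+
  then have "Q e \<subseteq> {v}" "Q e' \<subseteq> {v}"
    using Q_disjoint[OF e \<open>e \<noteq> e'\<close>] root_notin_Q[OF e(1)] root_notin_Q[OF e(2)] by blast+
  then show False
    using Q_nonempty e Q_disjoint[OF e \<open>e \<noteq> e'\<close>] by (metis Int_absorb subset_singletonD)
qed

end

lemma unicyclic_reroot:
  assumes k: "k \<ge> 3" and G: "unicyclic k G" and r: "r \<in> fst G"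
  obtains v I1 I2 P a where "ustar_data k r v I1 I2 P" "card P = card (snd G) - 2"
    "fst (ustar_graph r v I1 I2 P) = fst G"
    "bij_betw (\<lambda>e. insert r (e - {a e})) (snd G) (snd (ustar_graph r v I1 I2 P))"
    "\<And>e. e \<in> snd G \<Longrightarrow> a e \<in> e" "\<And>e. e \<in> snd G \<Longrightarrow> r \<notin> e - {a e}"
proof -
  have hg: "hypergraph G" and conn: "hg_connected G" and ck: "\<And>e. e \<in> snd G \<Longrightarrow> card e = k"
    using G unfolding unicyclic_def uniform_def by auto
  obtain Q where Q: "rooted_partition_on G r (fst G) Q"
    using rooted_partition_exists[OF hg conn r] .
  obtain s where s: "s \<in> snd G" "card (Q s) = k - 2"
    and ordinary: "\<And>e. e \<in> snd G \<Longrightarrow> e \<noteq> s \<Longrightarrow> card (Q e) = k - 1"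
    using unicyclic_special_edge[OF G Q] by blast
  have "Q s \<subseteq> s" "finite s"
    using Q s(1) hypergraph_finite_edge[OF hg s(1)] unfolding rooted_partition_on_def by auto
  then have "card (s - Q s) = 2"
    using ck[OF s(1)] s(2) k by (simp add: card_Diff_subset finite_subset)
  then obtain u1 u2 where u12: "s - Q s = {u1, u2}" "u1 \<noteq> u2"
    by (meson card_2_iff)
  obtain v u where vu: "s - Q s = {v, u}" "v \<noteq> u" "v \<noteq> r"
  proof (cases "u1 = r")
    case True
    then show ?thesis using that[of u2 u1] u12 by (simp add: insert_commute)
  next
    case False
    then show ?thesis using that[of u1 u2] u12 by simp
  qed
  have "v \<in> fst G"
    using vu hg s(1) unfolding hypergraph_def by blast
  then have "v \<in> (\<Union>e\<in>snd G. Q e)"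
    using Q vu(3) unfolding rooted_partition_on_def by simp
  then obtain t where t: "t \<in> snd G" "v \<in> Q t" by blast
  interpret unicyclic_rooted k G r Q s t v u
    by unfold_locales (use k G Q s ordinary vu t in auto)
  have "bij_betw (\<lambda>e. insert r (e - {moved e})) (snd G)
      (snd (ustar_graph r v (Q t - {v}) (Q s) (Q ` (snd G - {s, t}))))"
    unfolding bij_betw_def using inj_on_rerooted snd_rerooted by simp
  then show ?thesis
    by (rule that[OF ustar_data card_pendants fst_rerooted _ moved_in_edge root_notin_edge_minus_moved])
qed

section \<open>Comparison with \<open>U*\<close>\<close>

lemma quad_form_move_to_root:
  assumes G: "hypergraph G" and H: "hypergraph H"
    and bij: "bij_betw (\<lambda>e. insert r (e - {a e})) (snd G) (snd H)"
    and a: "\<And>e. e \<in> snd G \<Longrightarrow> a e \<in> e" "\<And>e. e \<in> snd G \<Longrightarrow> r \<notin> e - {a e}"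
  shows "quad_form H w - quad_form G w =
    (\<Sum>e\<in>snd G. 2 * (w r - w (a e)) * sum w (e - {a e}) / (real (card e) - 1))"
proof -
  have "pair_sum (insert r (e - {a e})) w / (real (card (insert r (e - {a e}))) - 1)
      - pair_sum e w / (real (card e) - 1)
      = 2 * (w r - w (a e)) * sum w (e - {a e}) / (real (card e) - 1)" if e: "e \<in> snd G" for e
  proof -
    have fin: "finite (e - {a e})" using hypergraph_finite_edge[OF G e] by simp
    have "card e > 0" using a(1)[OF e] hypergraph_finite_edge[OF G e] card_gt_0_iff by blast
    then have "card (insert r (e - {a e})) = card e"
      using fin a[OF e] hypergraph_finite_edge[OF G e] by (simp add: card_Suc_Diff1)
    moreover have "pair_sum (insert r (e - {a e})) w = 2 * w r * sum w (e - {a e}) + pair_sum (e - {a e}) w"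
      using pair_sum_insert[OF fin] a(2)[OF e] by blast
    moreover have "pair_sum e w = 2 * w (a e) * sum w (e - {a e}) + pair_sum (e - {a e}) w"
      using pair_sum_insert[OF fin, of "a e" w] a(1)[OF e] by (simp add: insert_absorb)
    ultimately show ?thesis
      by (simp add: diff_divide_distrib[symmetric] left_diff_distrib)
  qed
  then show ?thesis
    unfolding quad_form_edge_sum[OF G] quad_form_edge_sum[OF H]
      sum.reindex_bij_betw[OF bij, symmetric]
    by (simp add: sum_subtractf[symmetric])
qed

lemma quad_form_move_to_root_le:
  assumes G: "hypergraph G" and H: "hypergraph H"
    and bij: "bij_betw (\<lambda>e. insert r (e - {a e})) (snd G) (snd H)"
    and a: "\<And>e. e \<in> snd G \<Longrightarrow> a e \<in> e" "\<And>e. e \<in> snd G \<Longrightarrow> r \<notin> e - {a e}"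
    and w: "\<And>i. i \<in> fst G \<Longrightarrow> 0 \<le> w i \<and> w i \<le> w r"
  shows "quad_form G w \<le> quad_form H w"
    and "quad_form G w = quad_form H w \<Longrightarrow> \<forall>i\<in>fst G. w i > 0 \<Longrightarrow> \<forall>e\<in>snd G. w (a e) = w r"
proof -
  let ?T = "\<lambda>e. 2 * (w r - w (a e)) * sum w (e - {a e}) / (real (card e) - 1)"
  have sub: "e \<subseteq> fst G" "card e \<ge> 2" if "e \<in> snd G" for e
    using G that unfolding hypergraph_def by auto
  have T0: "?T e \<ge> 0" if "e \<in> snd G" for e
    using w sub[OF that] a(1)[OF that] by (intro divide_nonneg_nonneg mult_nonneg_nonneg sum_nonneg) auto
  then show "quad_form G w \<le> quad_form H w"
    using quad_form_move_to_root[OF G H bij a, of w] sum_nonneg[of "snd G" ?T] by simp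
  assume eq: "quad_form G w = quad_form H w" and pos: "\<forall>i\<in>fst G. w i > 0"
  have "(\<Sum>e\<in>snd G. ?T e) = 0" using quad_form_move_to_root[OF G H bij a, of w] eq by simp
  then have T: "?T e = 0" if "e \<in> snd G" for e
    using sum_nonneg_eq_0_iff[of "snd G" ?T] hypergraph_finite_edges[OF G] T0 that by simp
  show "\<forall>e\<in>snd G. w (a e) = w r"
  proof
    fix e assume e: "e \<in> snd G"
    have "card (e - {a e}) \<ge> 1"
      using sub(2)[OF e] a(1)[OF e] hypergraph_finite_edge[OF G e] by simp
    then have "e - {a e} \<noteq> {}" by (cases "e - {a e} = {}") simp_all
    then have "sum w (e - {a e}) > 0"
      using pos sub(1)[OF e] hypergraph_finite_edge[OF G e] by (intro sum_pos) auto
    moreover have "real (card e) - 1 > 0" using sub(2)[OF e] by simp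
    ultimately show "w (a e) = w r" using T[OF e] by simp
  qed
qed

lemma (in ustar_data) rerooted_eq_if_moved_weight_root:
  assumes G: "hypergraph G" and V: "fst U = fst G" and bij: "bij_betw (\<lambda>e. insert r (e - {a e})) (snd G) (snd U)"
    and a: "\<And>e. e \<in> snd G \<Longrightarrow> a e \<in> e"
    and w: "\<And>j. j \<in> fst G \<Longrightarrow> w j = w r * perron_vector j" "w r > 0"
    and moved: "\<And>e. e \<in> snd G \<Longrightarrow> w (a e) = w r"
  shows "G = U"
proof -
  have "a e = r" if e: "e \<in> snd G" for e
  proof (rule ccontr)
    assume ne: "a e \<noteq> r"
    have "a e \<in> fst G" using G a[OF e] e unfolding hypergraph_def by blast
    then have "perron_vector (a e) = 1"
      using w(1)[of "a e"] w(2) moved[OF e] by simp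
    moreover have "perron_vector (a e) < 1"
    proof (rule perron_vector_lt_root[OF ne])
      assume "a e = v"
      then have "v \<notin> insert r (e - {a e})" using r_ne_v by auto
      then show "P \<noteq> {}" using edge_without_v[OF bij_betw_apply[OF bij e]] by blast
    qed
    ultimately show False by simp
  qed
  then have "snd U = snd G"
    using bij a unfolding bij_betw_def by (simp add: insert_absorb cong: image_cong)
  then show ?thesis using V by (simp add: prod_eq_iff)
qed

lemma unicyclic_eigenvalue_bound:
  assumes k: "k \<ge> 3" and G: "unicyclic k G" and mu: "hg_eigenvalue G mu"
  shows "cmod mu \<le> ustar_lambda k (card (snd G) - 2)"
    and "cmod mu = ustar_lambda k (card (snd G) - 2) \<Longrightarrow>
      \<exists>r v I1 I2 P. ustar_data k r v I1 I2 P \<and> card P = card (snd G) - 2 \<and> G = ustar_graph r v I1 I2 P"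
proof -
  have hg: "hypergraph G" using G unfolding unicyclic_def by simp
  obtain w r where r: "r \<in> fst G" and w: "\<And>i. i \<in> fst G \<Longrightarrow> 0 \<le> w i \<and> w i \<le> w r"
    and S: "(\<Sum>i\<in>fst G. (w i)\<^sup>2) > 0" and norm: "cmod mu * (\<Sum>i\<in>fst G. (w i)\<^sup>2) \<le> quad_form G w"
    using hg_eigenvalue_modulus_vector[OF hg mu] by blast
  obtain v I1 I2 P a where U: "ustar_data k r v I1 I2 P" and card_P: "card P = card (snd G) - 2"
    and V: "fst (ustar_graph r v I1 I2 P) = fst G"
    and bij: "bij_betw (\<lambda>e. insert r (e - {a e})) (snd G) (snd (ustar_graph r v I1 I2 P))"
    and a: "\<And>e. e \<in> snd G \<Longrightarrow> a e \<in> e" "\<And>e. e \<in> snd G \<Longrightarrow> r \<notin> e - {a e}"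
    using unicyclic_reroot[OF k G r] by blast
  interpret U: ustar_data k r v I1 I2 P by (fact U)
  let ?H = "ustar_graph r v I1 I2 P" and ?S = "\<Sum>i\<in>fst G. (w i)\<^sup>2"
  have perron: "quad_form ?H w \<le> ustar_lambda k (card P) * ?S"
    using quad_form_le_perron[OF U.hypergraph, of U.perron_vector "ustar_lambda k (card P)" w]
      U.perron_vector_pos U.perron_vector_eigen V by simp
  have move: "quad_form G w \<le> quad_form ?H w"
    using hg U.hypergraph bij a w by (rule quad_form_move_to_root_le(1))
  have "cmod mu * ?S \<le> ustar_lambda k (card P) * ?S" using norm move perron by linarith
  then show le: "cmod mu \<le> ustar_lambda k (card (snd G) - 2)"
    using S card_P by simp
  assume "cmod mu = ustar_lambda k (card (snd G) - 2)"
  then have "cmod mu * ?S = ustar_lambda k (card P) * ?S" using card_P by simp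
  then have QG: "quad_form G w = quad_form ?H w" and QH: "quad_form ?H w = ustar_lambda k (card P) * ?S"
    using norm move perron by linarith+
  have proportional: "w j = w r * U.perron_vector j" if "j \<in> fst G" for j
    using U.proportional_perron_vector[of w j] QH V that by simp
  have "w r \<noteq> 0"
  proof
    assume "w r = 0"
    then have "?S = 0" using proportional by simp
    with S show False by simp
  qed
  then have wr: "w r > 0" using w[OF r] by simp
  then have "\<forall>i\<in>fst G. w i > 0"
    using proportional U.perron_vector_pos by simp
  with hg U.hypergraph bij a w QG have "\<forall>e\<in>snd G. w (a e) = w r"
    by (rule quad_form_move_to_root_le(2))
  then have "G = ?H"
    using U.rerooted_eq_if_moved_weight_root[OF hg V bij a(1) proportional wr] by blast
  then show "\<exists>r v I1 I2 P. ustar_data k r v I1 I2 P \<and> card P = card (snd G) - 2 \<and> G = ustar_graph r v I1 I2 P"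
    using U card_P by blast
qed

theorem theorem1p1:
  fixes G :: "'a hypergraph" and k n :: nat
  assumes "k \<ge> 3" and "unicyclic k G" and "card (fst G) = n"
  shows "spectral_radius G \<le> spectral_radius (Ustar k n) \<and>
         (spectral_radius G = spectral_radius (Ustar k n) \<longleftrightarrow> hg_iso G (Ustar k n))"
proof -
  let ?m = "card (snd G)"
  have hg: "hypergraph G" and n: "n = (k - 1) * ?m"
    using assms unfolding unicyclic_def by auto
  obtain P where U: "ustar_data k (0::nat) 1 {2..<k} {k..<2 * k - 2} P"
    and Ustar: "Ustar k n = ustar_graph 0 1 {2..<k} {k..<2 * k - 2} P" and card_P: "card P = ?m - 2"
    using Ustar_eq_ustar_graph[OF assms(1) unicyclic_edges_ge_2[OF assms(2)]] n by blast
  have rU: "spectral_radius (Ustar k n) = ustar_lambda k (?m - 2)"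
    and eU: "hg_eigenvalue (Ustar k n) (ustar_lambda k (?m - 2))"
    using ustar_data.spectral_radius[OF U] ustar_data.eigenvalue[OF U] Ustar card_P by simp_all
  have le: "spectral_radius G \<le> ustar_lambda k (?m - 2)"
    using spectral_radius_le[OF hg] unicyclic_eigenvalue_bound(1)[OF assms(1,2)] by blast
  moreover have "hg_iso G (Ustar k n)" if "spectral_radius G = ustar_lambda k (?m - 2)"
  proof -
    obtain mu where mu: "hg_eigenvalue G mu" "cmod mu = spectral_radius G"
      using spectral_radius_attained[OF hg] by blast
    have "cmod mu = ustar_lambda k (?m - 2)" using mu(2) that by simp
    then obtain r v I1 I2 P' where "ustar_data k r v I1 I2 P'" "card P' = ?m - 2"
      "G = ustar_graph r v I1 I2 P'"
      using unicyclic_eigenvalue_bound(2)[OF assms(1,2) mu(1)] by blast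
    then show ?thesis using ustar_graph_iso[OF _ U] Ustar card_P by simp
  qed
  moreover have "spectral_radius G = ustar_lambda k (?m - 2)" if "hg_iso G (Ustar k n)"
    using eigenvalue_norm_le_spectral_radius[OF hg hg_eigenvalue_iso[OF hg that eU]] le by simp
  ultimately show ?thesis using rU by auto
qed

end
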